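(* Assume (H1)–(H9) with (H7) in the form (H7-$\varepsilon$) (resp. (H7-WFL)), as described in the context, and let $\mu>\overline A$. Then there exist a decreasing family of events $\Omega_0^\varepsilon\subseteq\Omega_1^\varepsilon$ with $P(\Omega_0^\varepsilon)=1-\theta(\varepsilon)$, $\theta(\varepsilon)\to0$ as $\varepsilon\to0$ (resp. an event $\Omega_0$ of full probability), and a function $\overline m_\mu:\mathbb R\times\mathbb R\to[0,+\infty)$ such that for every $\omega\in\Omega_0^\varepsilon$ (resp. $\omega\in\Omega_0$) and all $x,y\in\mathbb R$, $$\frac{m_\mu(ty,tx,\omega)}{t}\to\overline m_\mu(y,x)\quad\text{as }t\to\infty.$$
   Context: $(\Omega,\mathbf F,P)$ probability space; $H:\mathbb R\times\mathbb R\times\Omega\to\mathbb R$ measurable; for Borel $V$, $\mathbf F(V)$ is the $\sigma$-algebra generated by $\omega\mapsto H(p,y,\omega)$, $y\in V$, $p\in\mathbb R$. $(\tau_z)$ is an ergodic group of measure-preserving maps of $\Omega$. (H1) $H$ Lipschitz in $p$ uniformly in $(y,\omega)$. (H2) $-c_0|p+\gamma|\le H\le C_0|p+\gamma|$. (H3) $\lim_{|p|\to\infty}\inf_{(y,\omega)}H=+\infty$. (H4) $|H(p,y,\omega)-H(p,x,\omega)|\le w(|x-y|(1+|p|))$. (H5) $H$ convex in $p$. (H6) $H(p,y,\omega)\ge H(0,y,\omega)$. (H7-WFL) $H=\phi(y)H_L+(1-\phi(y))H_R$, $\phi\in C^\infty$ non-increasing, $\phi=1$ on $(-\infty,-1]$,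 $0$ on $[1,\infty)$; or (H7-$\varepsilon$) $H_0\ge H_L,H_R$ and $H=\psi_1^\varepsilon(-y)H_L+H_0(1-\psi_1^\varepsilon(-y))(1-\psi_1^\varepsilon(y))+\psi_1^\varepsilon(y)H_R$, $\psi_1^\varepsilon\in C^\infty$, $=1$ for $y>2/\sqrt\varepsilon$, $=0$ for $y<1/\sqrt\varepsilon$. (H8) $H_\alpha(p,y+z,\omega)=H_\alpha(p,y,\tau_z\omega)$, $\alpha\in\{L,R,0\}$. (H9) $\mathbf F(U),\mathbf F(V)$ independent if $d(U,V)\ge1$. Let $\mu^\star_\alpha$ be the a.s. constant $\inf\{\mu:\exists v$ globally Lipschitz, $H_\alpha(Dv,y,\omega)\le\mu$ in $\mathbb R\}$. Under (H7-WFL), $\overline A=\max(\mu^\star_L,\mu^\star_R)$; under (H7-$\varepsilon$), $\overline A=\mu^\star_0$, and $\Omega_1^\varepsilon$ denotes a decreasing family of events with $P(\Omega_1^\varepsilon)\to1$ on which $\tilde A(\omega)=\overline A$, where $\tilde A(\omega)=\inf\{\mu:\exists v$ globally Lipschitz, $H(Dv,y,\omega)\le\mu$ in $\mathbb R\}$. The metric function is $m_\mu(y,x,\omega)=\sup\{v(y)-v(x):\ v$ globally Lipschitz, $H(Dv,z,\omega)\le\mu$ in $\mathbb R$ (viscosity sense)$\}$. *)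

theory Defs
  imports "HOL-Analysis.Analysis" "HOL-Probability.Probability"
begin

(* A Hamiltonian is a map  Hf :: real => real => 'a => real,  (p, y, omega) |-> Hf p y omega. *)

definition glob_lip :: "(real \<Rightarrow> real) \<Rightarrow> bool" where
  "glob_lip v \<longleftrightarrow> (\<exists>L. L-lipschitz_on UNIV v)"

definition visc_sub :: "(real \<Rightarrow> real \<Rightarrow> real) \<Rightarrow> (real \<Rightarrow> real) \<Rightarrow> real \<Rightarrow> bool" where
  "visc_sub F v mu \<longleftrightarrow> continuous_on UNIV v \<and>
     (\<forall>\<phi> \<phi>' y0. (\<forall>y. (\<phi> has_real_derivative \<phi>' y) (at y)) \<and> continuous_on UNIV \<phi>' \<and>
        (\<exists>e>0. \<forall>y. \<bar>y - y0\<bar> < e \<longrightarrow> v y - \<phi> y \<le> v y0 - \<phi> y0)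
        \<longrightarrow> F (\<phi>' y0) y0 \<le> mu)"

definition subsols :: "(real \<Rightarrow> real \<Rightarrow> 'a \<Rightarrow> real) \<Rightarrow> real \<Rightarrow> 'a \<Rightarrow> (real \<Rightarrow> real) set" where
  "subsols Hf mu \<omega> = {v. glob_lip v \<and> visc_sub (\<lambda>p y. Hf p y \<omega>) v mu}"

definition Atilde :: "(real \<Rightarrow> real \<Rightarrow> 'a \<Rightarrow> real) \<Rightarrow> 'a \<Rightarrow> real" where
  "Atilde Hf \<omega> = Inf {mu. subsols Hf mu \<omega> \<noteq> {}}"

definition mu_star :: "'a measure \<Rightarrow> (real \<Rightarrow> real \<Rightarrow> 'a \<Rightarrow> real) \<Rightarrow> real" where
  "mu_star M Hf = (THE c. AE \<omega> in M. Atilde Hf \<omega> = c)"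

definition metric_fn :: "real \<Rightarrow> (real \<Rightarrow> real \<Rightarrow> 'a \<Rightarrow> real) \<Rightarrow> real \<Rightarrow> real \<Rightarrow> 'a \<Rightarrow> real" where
  "metric_fn mu Hf y x \<omega> = Sup {v y - v x | v. v \<in> subsols Hf mu \<omega>}"

definition Fsig :: "'a measure \<Rightarrow> (real \<Rightarrow> real \<Rightarrow> 'a \<Rightarrow> real) \<Rightarrow> real set \<Rightarrow> 'a set set" where
  "Fsig M Hf V = sigma_sets (space M)
     (\<Union>p. \<Union>y\<in>V. {(\<lambda>\<omega>. Hf p y \<omega>) -` B \<inter> space M | B. B \<in> sets borel})"

definition ergodic_group :: "'a measure \<Rightarrow> (real \<Rightarrow> 'a \<Rightarrow> 'a) \<Rightarrow> bool" where
  "ergodic_group M \<tau> \<longleftrightarrow>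
     (\<forall>\<omega>\<in>space M. \<tau> 0 \<omega> = \<omega>) \<and>
     (\<forall>z w. \<forall>\<omega>\<in>space M. \<tau> (z + w) \<omega> = \<tau> z (\<tau> w \<omega>)) \<and>
     (\<forall>z. \<tau> z \<in> measurable M M \<and>
          (\<forall>A\<in>sets M. measure M (\<tau> z -` A \<inter> space M) = measure M A)) \<and>
     (\<forall>A\<in>sets M. (\<forall>z. \<tau> z -` A \<inter> space M = A) \<longrightarrow> measure M A = 0 \<or> measure M A = 1)"

definition H_meas :: "'a measure \<Rightarrow> (real \<Rightarrow> real \<Rightarrow> 'a \<Rightarrow> real) \<Rightarrow> bool" where
  "H_meas M Hf \<longleftrightarrow> (\<lambda>(py, \<omega>). Hf (fst py) (snd py) \<omega>) \<in> borel_measurable ((borel :: (real \<times> real) measure) \<Otimes>\<^sub>M M)"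

definition H1 :: "'a measure \<Rightarrow> (real \<Rightarrow> real \<Rightarrow> 'a \<Rightarrow> real) \<Rightarrow> bool" where
  "H1 M Hf \<longleftrightarrow> (\<exists>L. \<forall>p q y. \<forall>\<omega>\<in>space M. \<bar>Hf p y \<omega> - Hf q y \<omega>\<bar> \<le> L * \<bar>p - q\<bar>)"

definition H2 :: "'a measure \<Rightarrow> (real \<Rightarrow> real \<Rightarrow> 'a \<Rightarrow> real) \<Rightarrow> bool" where
  "H2 M Hf \<longleftrightarrow> (\<exists>c0 C0 \<gamma>. c0 > 0 \<and> C0 > 0 \<and> (\<forall>p y. \<forall>\<omega>\<in>space M.
      - c0 * \<bar>p + \<gamma>\<bar> \<le> Hf p y \<omega> \<and> Hf p y \<omega> \<le> C0 * \<bar>p + \<gamma>\<bar>))"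

definition H3 :: "'a measure \<Rightarrow> (real \<Rightarrow> real \<Rightarrow> 'a \<Rightarrow> real) \<Rightarrow> bool" where
  "H3 M Hf \<longleftrightarrow> (\<forall>K. \<exists>R. \<forall>p y. \<forall>\<omega>\<in>space M. \<bar>p\<bar> \<ge> R \<longrightarrow> Hf p y \<omega> \<ge> K)"

definition modulus :: "(real \<Rightarrow> real) \<Rightarrow> bool" where
  "modulus w \<longleftrightarrow> continuous_on {0..} w \<and> mono_on {0..} w \<and> w 0 = 0 \<and> (\<forall>r\<ge>0. w r \<ge> 0)"

definition H4 :: "'a measure \<Rightarrow> (real \<Rightarrow> real \<Rightarrow> 'a \<Rightarrow> real) \<Rightarrow> bool" where
  "H4 M Hf \<longleftrightarrow> (\<exists>w. modulus w \<and> (\<forall>p x y. \<forall>\<omega>\<in>space M.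
      \<bar>Hf p y \<omega> - Hf p x \<omega>\<bar> \<le> w (\<bar>x - y\<bar> * (1 + \<bar>p\<bar>))))"

definition H5 :: "'a measure \<Rightarrow> (real \<Rightarrow> real \<Rightarrow> 'a \<Rightarrow> real) \<Rightarrow> bool" where
  "H5 M Hf \<longleftrightarrow> (\<forall>y. \<forall>\<omega>\<in>space M. convex_on UNIV (\<lambda>p. Hf p y \<omega>))"

definition H6 :: "'a measure \<Rightarrow> (real \<Rightarrow> real \<Rightarrow> 'a \<Rightarrow> real) \<Rightarrow> bool" where
  "H6 M Hf \<longleftrightarrow> (\<forall>p y. \<forall>\<omega>\<in>space M. Hf p y \<omega> \<ge> Hf 0 y \<omega>)"

definition H1to6 :: "'a measure \<Rightarrow> (real \<Rightarrow> real \<Rightarrow> 'a \<Rightarrow> real) \<Rightarrow> bool" where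
  "H1to6 M Hf \<longleftrightarrow> H_meas M Hf \<and> H1 M Hf \<and> H2 M Hf \<and> H3 M Hf \<and> H4 M Hf \<and> H5 M Hf \<and> H6 M Hf"

definition H8 :: "'a measure \<Rightarrow> (real \<Rightarrow> 'a \<Rightarrow> 'a) \<Rightarrow> (real \<Rightarrow> real \<Rightarrow> 'a \<Rightarrow> real) \<Rightarrow> bool" where
  "H8 M \<tau> Hf \<longleftrightarrow> (\<forall>p y z. \<forall>\<omega>\<in>space M. Hf p (y + z) \<omega> = Hf p y (\<tau> z \<omega>))"

definition H9 :: "'a measure \<Rightarrow> (real \<Rightarrow> real \<Rightarrow> 'a \<Rightarrow> real) \<Rightarrow> bool" where
  "H9 M Hf \<longleftrightarrow> (\<forall>U V. U \<in> sets borel \<and> V \<in> sets borel \<and> setdist U V \<ge> 1 \<longrightarrow>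
      prob_space.indep_set M (Fsig M Hf U) (Fsig M Hf V))"

definition smooth :: "(real \<Rightarrow> real) \<Rightarrow> bool" where
  "smooth f \<longleftrightarrow> (\<forall>n x. ((deriv ^^ n) f) differentiable (at x))"

definition H7_WFL :: "'a measure \<Rightarrow> (real \<Rightarrow> real) \<Rightarrow> (real \<Rightarrow> real \<Rightarrow> 'a \<Rightarrow> real)
     \<Rightarrow> (real \<Rightarrow> real \<Rightarrow> 'a \<Rightarrow> real) \<Rightarrow> (real \<Rightarrow> real \<Rightarrow> 'a \<Rightarrow> real) \<Rightarrow> bool" where
  "H7_WFL M \<phi> HL HR Hf \<longleftrightarrow> smooth \<phi> \<and> antimono \<phi> \<and>
     (\<forall>y\<le>-1. \<phi> y = 1) \<and> (\<forall>y\<ge>1. \<phi> y = 0) \<and>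
     (\<forall>p y. \<forall>\<omega>\<in>space M. Hf p y \<omega> = \<phi> y * HL p y \<omega> + (1 - \<phi> y) * HR p y \<omega>)"

definition H7_eps :: "'a measure \<Rightarrow> real \<Rightarrow> (real \<Rightarrow> real) \<Rightarrow> (real \<Rightarrow> real \<Rightarrow> 'a \<Rightarrow> real)
     \<Rightarrow> (real \<Rightarrow> real \<Rightarrow> 'a \<Rightarrow> real) \<Rightarrow> (real \<Rightarrow> real \<Rightarrow> 'a \<Rightarrow> real) \<Rightarrow> (real \<Rightarrow> real \<Rightarrow> 'a \<Rightarrow> real) \<Rightarrow> bool" where
  "H7_eps M \<epsilon> \<psi> HL HR H0 Hf \<longleftrightarrow> smooth \<psi> \<and>
     (\<forall>y. y > 2 / sqrt \<epsilon> \<longrightarrow> \<psi> y = 1) \<and> (\<forall>y. y < 1 / sqrt \<epsilon> \<longrightarrow> \<psi> y = 0) \<and>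
     (\<forall>p y. \<forall>\<omega>\<in>space M. H0 p y \<omega> \<ge> HL p y \<omega> \<and> H0 p y \<omega> \<ge> HR p y \<omega>) \<and>
     (\<forall>p y. \<forall>\<omega>\<in>space M. Hf p y \<omega> = \<psi> (- y) * HL p y \<omega>
          + H0 p y \<omega> * (1 - \<psi> (- y)) * (1 - \<psi> y) + \<psi> y * HR p y \<omega>)"

end

theory Submission
  imports Defs
begin

text \<open>
  In one dimension the metric problem is explicit. If \<open>H(0, s) < \<mu>\<close> for all \<open>s\<close>, convexity and
  coercivity give every \<open>s\<close> a unique positive root \<open>b(s)\<close> of \<open>H(\<cdot>, s) = \<mu>\<close>, and for \<open>x \<le> y\<close> the
  metric function is \<open>m\<^sub>\<mu>(y, x) = \<integral>\<^sub>x\<^sup>y b\<close>: the primitive of \<open>b\<close> is a subsolution, and a quadratic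
  penalization shows that no Lipschitz subsolution grows faster. For \<open>y < x\<close> the same applies to the
  reflected Hamiltonian \<open>H(-p, -s)\<close>. Far to the right \<open>H\<close> coincides with \<open>H\<^sub>R\<close> and far to the left
  with \<open>H\<^sub>L\<close>, where the roots are bounded stationary processes; the ergodic theorem for flows
  (via Garsia's maximal inequality) gives their long-run averages almost surely, so
  \<open>m\<^sub>\<mu>(ty, tx)/t\<close> converges to a function that is linear on each half-line. The condition
  \<open>\<mu> > A\<close> guarantees \<open>H(0, \<cdot>, \<omega>) < \<mu>\<close> on the events in question, because \<open>Atilde \<omega>\<close> turns out
  to be \<open>sup\<^sub>s H(0, s, \<omega>)\<close>.
\<close>

section \<open>Primitives and long-run averages\<close>

definition primitive :: "(real \<Rightarrow> real) \<Rightarrow> real \<Rightarrow> real" where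
  "primitive f u = (if 0 \<le> u then integral {0..u} f else - integral {u..0} f)"

lemma primitive_0 [simp]: "primitive f 0 = 0"
  by (simp add: primitive_def)

lemma primitive_nonneg: "0 \<le> u \<Longrightarrow> primitive f u = integral {0..u} f"
  by (simp add: primitive_def)

lemma primitive_reflect: "primitive f (- u) = - primitive (\<lambda>s. f (- s)) u"
proof (cases "0 \<le> u")
  case True
  then show ?thesis
    using Henstock_Kurzweil_Integration.integral_reflect_real[where a=0 and b=u and f="\<lambda>s. f (- s)"]
    by (cases "u = 0") (auto simp: primitive_def)
next
  case False
  then show ?thesis
    using Henstock_Kurzweil_Integration.integral_reflect_real[where a=u and b=0 and f="\<lambda>s. f (- s)"]
    by (simp add: primitive_def)
qed

lemma integral_eq_primitive_diff:
  fixes f :: "real \<Rightarrow> real"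
  assumes int: "\<And>a b. f integrable_on {a..b}" and ab: "a \<le> b"
  shows "integral {a..b} f = primitive f b - primitive f a"
proof -
  consider "0 \<le> a" | "b < 0" | "a < 0" "0 \<le> b" by linarith
  then show ?thesis
  proof cases
    case 1
    then show ?thesis
      using Henstock_Kurzweil_Integration.integral_combine[OF 1 ab int] ab
      by (simp add: primitive_def)
  next
    case 2
    then show ?thesis
      using Henstock_Kurzweil_Integration.integral_combine[of a b 0, OF ab _ int] ab
      by (simp add: primitive_def)
  next
    case 3
    then show ?thesis
      using Henstock_Kurzweil_Integration.integral_combine[of a 0 b, OF _ _ int]
      by (simp add: primitive_def)
  qed
qed

lemma abs_integral_le:
  fixes f :: "real \<Rightarrow> real"
  assumes "f integrable_on {a..b}" and "a \<le> b" and "\<And>s. \<bar>f s\<bar> \<le> R"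
  shows "\<bar>integral {a..b} f\<bar> \<le> R * (b - a)"
  using has_integral_bound_real[of R "{}" f _ a b] assms abs_ge_zero[of "f a"]
  by (force simp: integrable_integral)

lemma primitive_lipschitz:
  fixes f :: "real \<Rightarrow> real"
  assumes int: "\<And>a b. f integrable_on {a..b}" and bd: "\<And>s. \<bar>f s\<bar> \<le> R"
  shows "\<bar>primitive f u - primitive f v\<bar> \<le> R * \<bar>u - v\<bar>"
proof (cases "v \<le> u")
  case True
  then show ?thesis using integral_eq_primitive_diff[OF int True] abs_integral_le[OF int True bd]
    by simp
next
  case False
  then have "u \<le> v" by simp
  then show ?thesis using integral_eq_primitive_diff[OF int] abs_integral_le[OF int _ bd]
    by (simp add: abs_minus_commute)
qed

lemma primitive_has_real_derivative:
  fixes f :: "real \<Rightarrow> real"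
  assumes c: "continuous_on UNIV f"
  shows "(primitive f has_real_derivative f x) (at x)"
proof -
  have int: "\<And>a b. f integrable_on {a..b}"
    by (rule integrable_continuous_real) (rule continuous_on_subset[OF c], simp)
  have "((\<lambda>u. integral {x-1..u} f) has_real_derivative f x) (at x within {x-1..x+1})"
    by (rule integral_has_real_derivative) (auto intro: continuous_on_subset[OF c])
  then have "((\<lambda>u. primitive f (x-1) + integral {x-1..u} f) has_real_derivative f x) (at x)"
    by (auto simp: at_within_Icc_at intro!: derivative_eq_intros)
  then show ?thesis
  proof (rule has_field_derivative_transform_within[of _ _ _ _ 1])
    fix y assume "dist y x < 1"
    then show "primitive f (x - 1) + integral {x - 1..y} f = primitive f y"
      using integral_eq_primitive_diff[OF int, of "x-1" y] by (simp add: dist_real_def)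
  qed auto
qed

definition long_run_average :: "(real \<Rightarrow> real) \<Rightarrow> real \<Rightarrow> bool" where
  "long_run_average g \<alpha> \<longleftrightarrow>
     (\<forall>a b. g integrable_on {a..b}) \<and> ((\<lambda>t. integral {0..t} g / t) \<longlongrightarrow> \<alpha>) at_top"

lemma primitive_scaling_limit_pos:
  fixes g gA :: "real \<Rightarrow> real"
  assumes intg: "\<And>a b. g integrable_on {a..b}" and avg: "long_run_average gA \<alpha>"
    and gA: "\<And>s. K \<le> s \<Longrightarrow> g s = gA s"
    and c: "0 < c"
  shows "((\<lambda>t. primitive g (t * c) / t) \<longlongrightarrow> \<alpha> * c) at_top"
proof -
  have intA: "\<And>a b. gA integrable_on {a..b}" and lim: "((\<lambda>t. integral {0..t} gA / t) \<longlongrightarrow> \<alpha>) at_top"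
    using avg by (auto simp: long_run_average_def)
  define K' where "K' = max K 0"
  define C where "C = primitive g K' - primitive gA K'"
  have primitive_g: "primitive g u = C + integral {0..u} gA" if "K' \<le> u" for u
  proof -
    have "integral {K'..u} g = integral {K'..u} gA"
      by (rule integral_cong) (use gA in \<open>auto simp: K'_def\<close>)
    then show ?thesis
      using integral_eq_primitive_diff[OF intg that] integral_eq_primitive_diff[OF intA that]
        primitive_nonneg[of u gA] that by (simp add: C_def K'_def)
  qed
  have "filterlim (\<lambda>t. t * c) at_top at_top"
    using filterlim_tendsto_pos_mult_at_top[OF tendsto_const c filterlim_ident]
    by (simp add: mult.commute)
  then have "((\<lambda>t. C / t + c * (integral {0..t * c} gA / (t * c))) \<longlongrightarrow> 0 + c * \<alpha>) at_top"
    by (intro tendsto_intros filterlim_compose[OF lim] tendsto_divide_0[OF tendsto_const]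
        filterlim_at_top_imp_at_infinity[OF filterlim_ident])
  moreover have "\<forall>\<^sub>F t in at_top. C / t + c * (integral {0..t * c} gA / (t * c)) = primitive g (t * c) / t"
    using eventually_ge_at_top[of "K' / c + 1"]
  proof eventually_elim
    case (elim t)
    have "0 \<le> K' / c" using c by (simp add: K'_def)
    then have "0 < t" using elim by linarith
    moreover have "K' \<le> t * c" using elim c by (simp add: field_simps)
    ultimately show ?case using primitive_g[of "t * c"] c by (simp add: field_simps)
  qed
  ultimately show ?thesis by (auto intro: Lim_transform_eventually simp: mult.commute)
qed

definition two_slope :: "real \<Rightarrow> real \<Rightarrow> real \<Rightarrow> real" where
  "two_slope \<alpha> \<beta> c = (if 0 \<le> c then \<alpha> * c else \<beta> * c)"

lemma two_slope_mono: "0 \<le> \<alpha> \<Longrightarrow> 0 \<le> \<beta> \<Longrightarrow> x \<le> y \<Longrightarrow> two_slope \<alpha> \<beta> x \<le> two_slope \<alpha> \<beta> y"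
  unfolding two_slope_def
  by (auto intro: mult_left_mono order_trans[of _ 0] simp: mult_nonneg_nonpos)

lemma primitive_scaling_limit:
  fixes g gA gB :: "real \<Rightarrow> real"
  assumes intg: "\<And>a b. g integrable_on {a..b}"
    and avgA: "long_run_average gA \<alpha>" and avgB: "long_run_average gB \<beta>"
    and gA: "\<And>s. K \<le> s \<Longrightarrow> g s = gA s" and gB: "\<And>s. s \<le> - K \<Longrightarrow> g s = gB (- s)"
  shows "((\<lambda>t. primitive g (t * c) / t) \<longlongrightarrow> two_slope \<alpha> \<beta> c) at_top"
proof -
  consider "c = 0" | "0 < c" | "c < 0" by linarith
  then show ?thesis
  proof cases
    case 2
    then show ?thesis
      using primitive_scaling_limit_pos[OF intg avgA gA] by (simp add: two_slope_def)
  next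
    case 3
    have "((\<lambda>t. primitive (\<lambda>s. g (- s)) (t * - c) / t) \<longlongrightarrow> \<beta> * - c) at_top"
    proof (rule primitive_scaling_limit_pos[where K=K, OF _ avgB])
      show "(\<lambda>s. g (- s)) integrable_on {a..b}" for a b
        using intg[of "- b" "- a"]
          Henstock_Kurzweil_Integration.integrable_reflect_real[where f=g and a="- b" and b="- a"]
        by simp
    qed (use gB 3 in auto)
    then have "((\<lambda>t. - (primitive (\<lambda>s. g (- s)) (t * - c) / t)) \<longlongrightarrow> \<beta> * c) at_top"
      using tendsto_minus by fastforce
    moreover have "primitive g (t * c) = - primitive (\<lambda>s. g (- s)) (t * - c)" for t
      using primitive_reflect[of g "t * - c"] by simp
    ultimately show ?thesis
      using 3 by (simp add: two_slope_def)
  qed (simp add: two_slope_def)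
qed

lemma nat_floor_bounds: "1 \<le> t \<Longrightarrow> t - 1 \<le> real (nat \<lfloor>t\<rfloor>) \<and> real (nat \<lfloor>t\<rfloor>) \<le> t"
  using real_of_int_floor_gt_diff_one[of t] of_int_floor_le[of t] by simp

lemma tendsto_nat_floor_div_at_top: "((\<lambda>t. real (nat \<lfloor>t\<rfloor>) / t) \<longlongrightarrow> 1) at_top"
proof (rule tendsto_sandwich)
  show "\<forall>\<^sub>F t in at_top. 1 - 1 / t \<le> real (nat \<lfloor>t\<rfloor>) / t"
    using eventually_ge_at_top[of "1::real"]
  proof eventually_elim
    case (elim t)
    then have "(t - 1) / t \<le> real (nat \<lfloor>t\<rfloor>) / t" using nat_floor_bounds
      by (simp add: divide_right_mono)
    then show ?case using elim by (simp add: diff_divide_distrib)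
  qed
  show "\<forall>\<^sub>F t in at_top. real (nat \<lfloor>t\<rfloor>) / t \<le> 1"
    using eventually_ge_at_top[of "1::real"]
    by eventually_elim (use nat_floor_bounds in auto)
  have "((\<lambda>t::real. 1 - 1 / t) \<longlongrightarrow> 1 - 0) at_top"
    by (intro tendsto_diff tendsto_const tendsto_divide_0[OF tendsto_const]
        filterlim_at_top_imp_at_infinity[OF filterlim_ident])
  then show "((\<lambda>t::real. 1 - 1 / t) \<longlongrightarrow> 1) at_top" by simp
qed simp

lemma averages_at_top_of_sequentially:
  fixes g :: "real \<Rightarrow> real"
  assumes int: "\<And>a b. g integrable_on {a..b}" and bd: "\<And>s. \<bar>g s\<bar> \<le> R"
    and lim: "(\<lambda>n. integral {0..real n} g / real n) \<longlonglongrightarrow> L"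
  shows "((\<lambda>t. integral {0..t} g / t) \<longlongrightarrow> L) at_top"
proof -
  define n where "n t = real (nat \<lfloor>t\<rfloor>)" for t :: real
  have "filterlim (\<lambda>t. nat \<lfloor>t\<rfloor>) sequentially at_top"
    by (rule filterlim_compose[OF filterlim_nat_sequentially filterlim_floor_sequentially])
  then have avg_n: "((\<lambda>t. primitive g (n t) / n t) \<longlongrightarrow> L) at_top"
    using filterlim_compose[OF lim] by (simp add: n_def primitive_nonneg)
  have "((\<lambda>t. R / t) \<longlongrightarrow> 0) at_top"
    by (intro tendsto_divide_0[OF tendsto_const] filterlim_at_top_imp_at_infinity[OF filterlim_ident])
  then have remainder: "((\<lambda>t. (primitive g t - primitive g (n t)) / t) \<longlongrightarrow> 0) at_top"
  proof (rule Lim_null_comparison[rotated])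
    show "\<forall>\<^sub>F t in at_top. norm ((primitive g t - primitive g (n t)) / t) \<le> R / t"
      using eventually_ge_at_top[of "1::real"]
    proof eventually_elim
      case (elim t)
      have "\<bar>primitive g t - primitive g (n t)\<bar> \<le> R * \<bar>t - n t\<bar>"
        by (rule primitive_lipschitz[OF int bd])
      also have "\<dots> \<le> R * 1"
      proof (rule mult_left_mono)
        show "\<bar>t - n t\<bar> \<le> 1"
          using nat_floor_bounds[OF elim] unfolding n_def abs_le_iff by linarith
      qed (use bd[of 0] in auto)
      finally show ?case using elim by (simp add: abs_divide divide_right_mono)
    qed
  qed
  have "((\<lambda>t. primitive g (n t) / n t * (n t / t) + (primitive g t - primitive g (n t)) / t)
      \<longlongrightarrow> L * 1 + 0) at_top"
    unfolding n_def
    by (intro tendsto_intros avg_n[unfolded n_def] tendsto_nat_floor_div_at_top remainder[unfolded n_def])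
  moreover have "\<forall>\<^sub>F t in at_top. primitive g (n t) / n t * (n t / t)
        + (primitive g t - primitive g (n t)) / t
      = integral {0..t} g / t"
    using eventually_ge_at_top[of "1::real"]
    by eventually_elim (auto simp: n_def primitive_nonneg diff_divide_distrib)
  ultimately show ?thesis by (auto intro: Lim_transform_eventually)
qed

section \<open>An ergodic theorem for flows\<close>

lemma ergodic_groupD:
  assumes "ergodic_group M \<tau>"
  shows ergodic_group_measurable: "\<tau> z \<in> measurable M M"
    and ergodic_group_space: "\<omega> \<in> space M \<Longrightarrow> \<tau> z \<omega> \<in> space M"
    and ergodic_group_add: "\<omega> \<in> space M \<Longrightarrow> \<tau> (z + w) \<omega> = \<tau> z (\<tau> w \<omega>)"
    and ergodic_group_0: "\<omega> \<in> space M \<Longrightarrow> \<tau> 0 \<omega> = \<omega>"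
    and ergodic_group_preserving: "A \<in> sets M \<Longrightarrow> measure M (\<tau> z -` A \<inter> space M) = measure M A"
  using assms unfolding ergodic_group_def by (auto intro: measurable_space)

lemma ergodic_group_invariant_set:
  assumes "ergodic_group M \<tau>" and "A \<in> sets M"
    and "\<And>z \<omega>. \<omega> \<in> space M \<Longrightarrow> \<tau> z \<omega> \<in> A \<longleftrightarrow> \<omega> \<in> A"
  shows "measure M A = 0 \<or> measure M A = 1"
proof -
  have "\<tau> z -` A \<inter> space M = A" for z
    using assms(3) sets.sets_into_space[OF assms(2)] by auto
  then show ?thesis using assms(1,2) unfolding ergodic_group_def by blast
qed

lemma ergodic_group_rescale:
  assumes "ergodic_group M \<tau>" and "c \<noteq> 0"
  shows "ergodic_group M (\<lambda>z. \<tau> (c * z))"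
proof -
  have "\<forall>z. \<tau> z -` A \<inter> space M = A" if "\<forall>z. \<tau> (c * z) -` A \<inter> space M = A" for A
  proof
    fix z show "\<tau> z -` A \<inter> space M = A"
      using that[rule_format, of "z / c"] assms(2) by simp
  qed
  then show ?thesis
    using assms(1) unfolding ergodic_group_def by (simp add: distrib_left)
qed

context prob_space
begin

lemma ergodic_invariant_le_mean:
  fixes f :: "'a \<Rightarrow> real"
  assumes E: "ergodic_group M \<tau>" and f[measurable]: "f \<in> borel_measurable M"
    and bounded: "\<And>\<omega>. \<omega> \<in> space M \<Longrightarrow> \<bar>f \<omega>\<bar> \<le> C"
    and invariant: "\<And>z \<omega>. \<omega> \<in> space M \<Longrightarrow> f (\<tau> z \<omega>) = f \<omega>"
  shows "AE \<omega> in M. f \<omega> \<le> (\<integral>\<omega>. f \<omega> \<partial>M)"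
proof -
  define c where "c = (\<integral>\<omega>. f \<omega> \<partial>M)"
  define A where "A = {\<omega> \<in> space M. c < f \<omega>}"
  have A[measurable]: "A \<in> sets M" unfolding A_def by measurable
  have "measure M A \<noteq> 1"
  proof
    assume "measure M A = 1"
    then have "AE \<omega> in M. c < f \<omega>" using AE_prob_1 by (force simp: A_def)
    moreover have "integrable M f"
      using bounded by (intro integrable_const_bound[where B=C]) auto
    ultimately have "(\<integral>\<omega>. c \<partial>M) < (\<integral>\<omega>. f \<omega> \<partial>M)"
      by (intro integral_less_AE_space) (auto simp: emeasure_space_1)
    then show False by (simp add: c_def prob_space)
  qed
  moreover have "\<tau> z \<omega> \<in> A \<longleftrightarrow> \<omega> \<in> A" if "\<omega> \<in> space M" for z \<omega>
    using that by (simp add: A_def ergodic_group_space[OF E] invariant)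
  ultimately have "measure M A = 0"
    using ergodic_group_invariant_set[OF E A] by blast
  then have "A \<in> null_sets M" using A by (simp add: emeasure_eq_measure null_sets_def)
  from AE_not_in[OF this] AE_space show ?thesis
    by eventually_elim (auto simp: A_def c_def)
qed

lemma ergodic_invariant_AE_const:
  fixes f :: "'a \<Rightarrow> real"
  assumes E: "ergodic_group M \<tau>" and f[measurable]: "f \<in> borel_measurable M"
    and bounded: "\<And>\<omega>. \<omega> \<in> space M \<Longrightarrow> \<bar>f \<omega>\<bar> \<le> C"
    and invariant: "\<And>z \<omega>. \<omega> \<in> space M \<Longrightarrow> f (\<tau> z \<omega>) = f \<omega>"
  shows "AE \<omega> in M. f \<omega> = (\<integral>\<omega>. f \<omega> \<partial>M)"
proof -
  have "AE \<omega> in M. f \<omega> \<le> (\<integral>\<omega>. f \<omega> \<partial>M)"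
    using E f bounded invariant by (rule ergodic_invariant_le_mean)
  moreover have "AE \<omega> in M. - f \<omega> \<le> (\<integral>\<omega>. - f \<omega> \<partial>M)"
    using bounded invariant by (intro ergodic_invariant_le_mean[OF E]) auto
  ultimately show ?thesis by eventually_elim simp
qed

end

text \<open>Garsia's pointwise inequality behind the maximal ergodic lemma, used below with
  \<open>a j = F ((T ^^ j) \<omega>)\<close>.\<close>

lemma Max_partial_sums_shift:
  fixes a :: "nat \<Rightarrow> real"
  shows "Max ((\<lambda>k. \<Sum>j<k. a j) ` {..N})
    \<le> a 0 * of_bool (\<exists>k\<in>{1..N}. 0 < (\<Sum>j<k. a j)) + Max ((\<lambda>k. \<Sum>j<k. a (Suc j)) ` {..N})"
    (is "Max (?S ` _) \<le> _ * of_bool ?pos + ?m'")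
proof -
  have shift: "?S (Suc k) = a 0 + (\<Sum>j<k. a (Suc j))" for k
    by (simp only: sum.lessThan_Suc_shift)
  have m'_ge: "(\<Sum>j<k. a (Suc j)) \<le> ?m'" if "k \<le> N" for k
    using that by (intro Max_ge) auto
  show ?thesis
  proof (cases ?pos)
    case True
    then obtain k1 where k1: "k1 \<in> {1..N}" "0 < ?S k1" by blast
    have "?S k \<le> a 0 + ?m'" if "k \<le> N" for k
    proof (cases k)
      case 0
      obtain k1' where k1': "k1 = Suc k1'" using k1 by (cases k1) auto
      then have "(\<Sum>j<k1'. a (Suc j)) \<le> ?m'" using k1 by (intro m'_ge) auto
      moreover have "0 < a 0 + (\<Sum>j<k1'. a (Suc j))" using k1 k1' shift[of k1'] by simp
      ultimately show ?thesis using 0 by (simp only: lessThan_0 sum.empty)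
    next
      case (Suc k')
      then have "(\<Sum>j<k'. a (Suc j)) \<le> ?m'" using that by (intro m'_ge) auto
      then show ?thesis using shift[of k'] unfolding Suc by linarith
    qed
    then show ?thesis using True by (auto intro: Max.boundedI)
  next
    case False
    then have "?S k \<le> 0" if "k \<le> N" for k
      using that by (cases "k = 0") (auto simp: not_less)
    moreover have "0 \<le> ?m'" using m'_ge[of 0] by simp
    ultimately show ?thesis using False by (auto intro: Max.boundedI order_trans)
  qed
qed

locale measure_preserving_map = prob_space M for M :: "'a measure" +
  fixes T :: "'a \<Rightarrow> 'a"
  assumes T_measurable[measurable]: "T \<in> measurable M M"
    and distr_T: "distr M M T = M"
begin

lemma abs_birkhoff_sum_le:
  fixes F :: "'a \<Rightarrow> real"
  assumes "\<omega> \<in> space M" and "\<And>\<omega>. \<omega> \<in> space M \<Longrightarrow> \<bar>F \<omega>\<bar> \<le> C"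
  shows "\<bar>\<Sum>j<k. F ((T ^^ j) \<omega>)\<bar> \<le> real k * C"
proof -
  have "\<bar>\<Sum>j<k. F ((T ^^ j) \<omega>)\<bar> \<le> (\<Sum>j<k. C)"
    using assms
    by (intro order_trans[OF sum_abs] sum_mono assms(2)
        measurable_space[OF measurable_compose_n[OF T_measurable]])
  then show ?thesis by simp
qed

lemma maximal_ergodic_lemma:
  fixes F :: "'a \<Rightarrow> real"
  assumes F[measurable]: "F \<in> borel_measurable M" and bounded: "\<And>\<omega>. \<omega> \<in> space M \<Longrightarrow> \<bar>F \<omega>\<bar> \<le> C"
  shows "0 \<le> (\<integral>\<omega>. F \<omega> * indicator {\<omega> \<in> space M. \<exists>k\<in>{1..N}. 0 < (\<Sum>j<k. F ((T ^^ j) \<omega>))} \<omega> \<partial>M)"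
    (is "0 \<le> (\<integral>\<omega>. F \<omega> * indicator ?B \<omega> \<partial>M)")
proof -
  define m where "m \<omega> = Max ((\<lambda>k. \<Sum>j<k. F ((T ^^ j) \<omega>)) ` {..N})" for \<omega>
  have [measurable]: "?B \<in> sets M" "m \<in> borel_measurable M"
    unfolding m_def by measurable
  have C: "0 \<le> C" using bounded[of "SOME \<omega>. \<omega> \<in> space M"] not_empty some_in_eq by force
  have m_bounded: "\<bar>m \<omega>\<bar> \<le> real N * C" if "\<omega> \<in> space M" for \<omega>
  proof -
    have "m \<omega> \<in> (\<lambda>k. \<Sum>j<k. F ((T ^^ j) \<omega>)) ` {..N}"
      unfolding m_def by (intro Max_in) auto
    then obtain k where "k \<le> N" "m \<omega> = (\<Sum>j<k. F ((T ^^ j) \<omega>))" by auto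
    moreover have "\<bar>\<Sum>j<k. F ((T ^^ j) \<omega>)\<bar> \<le> real k * C"
      by (rule abs_birkhoff_sum_le[OF that]) (rule bounded)
    moreover have "real k * C \<le> real N * C" using \<open>k \<le> N\<close> C by (intro mult_right_mono) auto
    ultimately show ?thesis by simp
  qed
  have step: "m \<omega> \<le> F \<omega> * indicator ?B \<omega> + m (T \<omega>)" if "\<omega> \<in> space M" for \<omega>
  proof -
    have shift: "(\<lambda>k. \<Sum>j<k. F ((T ^^ Suc j) \<omega>)) = (\<lambda>k. \<Sum>j<k. F ((T ^^ j) (T \<omega>)))"
      by (simp add: funpow_Suc_right del: funpow.simps)
    show ?thesis
      using Max_partial_sums_shift[of "\<lambda>j. F ((T ^^ j) \<omega>)" N]
      unfolding m_def shift funpow_0 indicator_def by (simp only: mem_Collect_eq that simp_thms)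
  qed
  have integrable: "integrable M m" "integrable M (\<lambda>\<omega>. m (T \<omega>))"
    using m_bounded measurable_space[OF T_measurable]
    by (auto intro!: integrable_const_bound[where B="real N * C"])
  have "(\<integral>\<omega>. m (T \<omega>) \<partial>M) = (\<integral>\<omega>. m \<omega> \<partial>M)"
    using integral_distr[of T M M m] distr_T by simp
  then have "0 = (\<integral>\<omega>. m \<omega> - m (T \<omega>) \<partial>M)"
    using integrable by simp
  also have "\<dots> \<le> (\<integral>\<omega>. F \<omega> * indicator ?B \<omega> \<partial>M)"
  proof (rule integral_mono)
    show "integrable M (\<lambda>\<omega>. F \<omega> * indicator ?B \<omega>)"
      using bounded C by (intro integrable_const_bound[where B=C]) (auto simp: indicator_def)
  qed (use integrable step in \<open>auto simp: diff_le_eq\<close>)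
  finally show ?thesis .
qed

lemma mean_ge_of_AE_partial_sums_exceed:
  fixes F :: "'a \<Rightarrow> real"
  assumes F[measurable]: "F \<in> borel_measurable M" and bounded: "\<And>\<omega>. \<omega> \<in> space M \<Longrightarrow> \<bar>F \<omega>\<bar> \<le> C"
    and exceed: "AE \<omega> in M. \<exists>k\<ge>1. a * real k < (\<Sum>j<k. F ((T ^^ j) \<omega>))"
  shows "a \<le> (\<integral>\<omega>. F \<omega> \<partial>M)"
proof -
  define G where "G \<omega> = F \<omega> - a" for \<omega>
  have G[measurable]: "G \<in> borel_measurable M" unfolding G_def by measurable
  have G_bounded: "\<bar>G \<omega>\<bar> \<le> C + \<bar>a\<bar>" if "\<omega> \<in> space M" for \<omega>
    using bounded[OF that] by (simp add: G_def)
  define B where "B N = {\<omega> \<in> space M. \<exists>k\<in>{1..N}. 0 < (\<Sum>j<k. G ((T ^^ j) \<omega>))}" for N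
  have [measurable]: "B N \<in> sets M" for N unfolding B_def by measurable
  have sum_G: "(\<Sum>j<k. G ((T ^^ j) \<omega>)) = (\<Sum>j<k. F ((T ^^ j) \<omega>)) - real k * a" for k \<omega>
    by (simp add: G_def sum_subtractf)
  have lim: "(\<lambda>N. \<integral>\<omega>. G \<omega> * indicator (B N) \<omega> \<partial>M) \<longlonglongrightarrow> (\<integral>\<omega>. G \<omega> \<partial>M)"
  proof (rule integral_dominated_convergence[where w="\<lambda>_. C + \<bar>a\<bar>"])
    show "AE \<omega> in M. (\<lambda>N. G \<omega> * indicator (B N) \<omega>) \<longlonglongrightarrow> G \<omega>"
      using exceed AE_space
    proof eventually_elim
      case (elim \<omega>)
      then obtain k where k: "k \<ge> 1" "a * real k < (\<Sum>j<k. F ((T ^^ j) \<omega>))" by blast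
      then have "\<omega> \<in> B N" if "k \<le> N" for N
        unfolding B_def sum_G using elim(2) that by (auto intro!: bexI[of _ k] simp: algebra_simps)
      then have "\<forall>N\<ge>k. G \<omega> * indicator (B N) \<omega> = G \<omega>" by simp
      then show ?case
        by (intro tendsto_eventually) (auto simp: eventually_sequentially)
    qed
    show "AE \<omega> in M. norm (G \<omega> * indicator (B N) \<omega>) \<le> C + \<bar>a\<bar>" for N
      using G_bounded by (intro AE_I2) (auto simp: indicator_def intro: order_trans[OF abs_ge_zero])
  qed auto
  moreover have "0 \<le> (\<integral>\<omega>. G \<omega> * indicator (B N) \<omega> \<partial>M)" for N
    unfolding B_def by (rule maximal_ergodic_lemma[OF G G_bounded])
  ultimately have "0 \<le> (\<integral>\<omega>. G \<omega> \<partial>M)" using LIMSEQ_le_const by blast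
  moreover have "integrable M F"
    using bounded by (intro integrable_const_bound[where B=C]) auto
  ultimately show ?thesis by (simp add: G_def prob_space)
qed

end

locale ergodic_stationary_process = prob_space M for M :: "'a measure" +
  fixes \<tau> :: "real \<Rightarrow> 'a \<Rightarrow> 'a" and f :: "real \<Rightarrow> 'a \<Rightarrow> real" and R :: real
  assumes ergodic: "ergodic_group M \<tau>"
    and measurable: "(\<lambda>(\<omega>, s). f s \<omega>) \<in> borel_measurable (M \<Otimes>\<^sub>M lborel)"
    and bounded: "\<And>\<omega> s. \<omega> \<in> space M \<Longrightarrow> \<bar>f s \<omega>\<bar> \<le> R"
    and stationary: "\<And>\<omega> s z. \<omega> \<in> space M \<Longrightarrow> f (s + z) \<omega> = f s (\<tau> z \<omega>)"
begin

lemma path_set_integrable: "\<omega> \<in> space M \<Longrightarrow> set_integrable lborel {a..b} (\<lambda>s. f s \<omega>)"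
  unfolding set_integrable_def
  using measurable_Pair2[OF measurable]
  by (intro integrableI_bounded_set_indicator[where B=R]) (auto simp: bounded emeasure_lborel_Icc_eq)

lemma path_integrable: "\<omega> \<in> space M \<Longrightarrow> (\<lambda>s. f s \<omega>) integrable_on {a..b}"
  using set_borel_integral_eq_integral(1)[OF path_set_integrable] by blast

definition unit_integral :: "'a \<Rightarrow> real" where
  "unit_integral \<omega> = integral {0..1} (\<lambda>s. f s \<omega>)"

definition mean :: real where
  "mean = (\<integral>\<omega>. unit_integral \<omega> \<partial>M)"

lemma unit_integral_measurable[measurable]: "unit_integral \<in> borel_measurable M"
proof -
  have "(\<lambda>x. indicator {0..1} (snd x) *\<^sub>R (case x of (\<omega>, s) \<Rightarrow> f s \<omega>)) \<in> borel_measurable (M \<Otimes>\<^sub>M lborel)"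
    using measurable by measurable
  then have "(\<lambda>\<omega>. \<integral>s. indicator {0..1} s *\<^sub>R f s \<omega> \<partial>lborel) \<in> borel_measurable M"
    by (intro lborel.borel_measurable_lebesgue_integral) (simp add: case_prod_beta')
  then show ?thesis
    by (rule measurable_cong[THEN iffD1, rotated])
       (simp add: unit_integral_def set_borel_integral_eq_integral(2)[OF path_set_integrable, symmetric]
         set_lebesgue_integral_def)
qed

lemma unit_integral_bounded: "\<omega> \<in> space M \<Longrightarrow> \<bar>unit_integral \<omega>\<bar> \<le> R"
  using abs_integral_le[OF path_integrable, of \<omega> 0 1 R] bounded by (simp add: unit_integral_def)

lemma mean_nonneg: "(\<And>\<omega> s. \<omega> \<in> space M \<Longrightarrow> 0 \<le> f s \<omega>) \<Longrightarrow> 0 \<le> mean"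
  unfolding mean_def unit_integral_def
  by (intro integral_nonneg_AE AE_I2 Henstock_Kurzweil_Integration.integral_nonneg path_integrable) auto

sublocale unit_shift: measure_preserving_map M "\<tau> 1"
proof
  show "\<tau> 1 \<in> measurable M M" using ergodic_group_measurable[OF ergodic] .
  show "distr M M (\<tau> 1) = M"
  proof (rule measure_eqI)
    fix A assume "A \<in> sets (distr M M (\<tau> 1))"
    then have A: "A \<in> sets M" by simp
    show "emeasure (distr M M (\<tau> 1)) A = emeasure M A"
      using emeasure_distr[OF ergodic_group_measurable[OF ergodic] A]
        ergodic_group_preserving[OF ergodic A, of 1]
        measurable_sets[OF ergodic_group_measurable[OF ergodic] A]
      by (simp add: emeasure_eq_measure)
  qed simp
qed

lemma unit_shift_funpow: "\<omega> \<in> space M \<Longrightarrow> (\<tau> 1 ^^ k) \<omega> = \<tau> (real k) \<omega>"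
  by (induction k)
    (simp_all add: ergodic_group_0[OF ergodic] ergodic_group_add[OF ergodic, symmetric] add.commute)

lemma integral_eq_sum_unit_integrals:
  "\<omega> \<in> space M \<Longrightarrow> integral {0..real n} (\<lambda>s. f s \<omega>) = (\<Sum>k<n. unit_integral ((\<tau> 1 ^^ k) \<omega>))"
proof (induction n)
  case (Suc n)
  have "integral {real n..real n + 1} (\<lambda>s. f s \<omega>) = integral {0..1} ((\<lambda>s. f s \<omega>) \<circ> (+) (real n))"
    using integral_shift_Icc_real[where f="\<lambda>s. f s \<omega>" and c="real n" and a=0 and b=1]
    by (simp add: add.commute)
  also have "\<dots> = unit_integral ((\<tau> 1 ^^ n) \<omega>)"
    using stationary[OF Suc.prems] unit_shift_funpow[OF Suc.prems]
    by (simp add: unit_integral_def comp_def add.commute)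
  finally have "integral {real n..real n + 1} (\<lambda>s. f s \<omega>) = unit_integral ((\<tau> 1 ^^ n) \<omega>)" .
  moreover have "integral {0..real n} (\<lambda>s. f s \<omega>) + integral {real n..real n + 1} (\<lambda>s. f s \<omega>)
      = integral {0..real (Suc n)} (\<lambda>s. f s \<omega>)"
    using Henstock_Kurzweil_Integration.integral_combine[of 0 "real n" "real n + 1" "\<lambda>s. f s \<omega>"]
      path_integrable[OF Suc.prems] by (simp add: add.commute)
  ultimately show ?case using Suc by simp
qed simp

definition average :: "nat \<Rightarrow> 'a \<Rightarrow> real" where
  "average n \<omega> = integral {0..real n} (\<lambda>s. f s \<omega>) / real n"

lemma average_measurable[measurable]: "average n \<in> borel_measurable M"
proof -
  have "(\<lambda>\<omega>. (\<Sum>k<n. unit_integral ((\<tau> 1 ^^ k) \<omega>)) / real n) \<in> borel_measurable M"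
    by measurable
  then show ?thesis
    by (rule measurable_cong[THEN iffD1, rotated]) (simp add: average_def integral_eq_sum_unit_integrals)
qed

lemma average_shift_tendsto_0:
  assumes \<omega>: "\<omega> \<in> space M"
  shows "(\<lambda>n. average n (\<tau> z \<omega>) - average n \<omega>) \<longlonglongrightarrow> 0"
proof -
  let ?g = "\<lambda>s. f s \<omega>"
  have int: "\<And>a b. ?g integrable_on {a..b}" using path_integrable[OF \<omega>] .
  have shifted: "integral {0..real n} (\<lambda>s. f s (\<tau> z \<omega>)) = primitive ?g (real n + z) - primitive ?g z" for n
  proof -
    have "integral {0..real n} (\<lambda>s. f s (\<tau> z \<omega>)) = integral {0..real n} (?g \<circ> (+) z)"
      using stationary[OF \<omega>] by (intro integral_cong) (auto simp: add.commute)
    also have "\<dots> = integral {z..real n + z} ?g"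
      using integral_shift_Icc_real[where f="?g" and c=z and a=0 and b="real n"]
      by (simp add: add.commute)
    finally show ?thesis using integral_eq_primitive_diff[OF int, of z "real n + z"] by simp
  qed
  have diff: "average n (\<tau> z \<omega>) - average n \<omega>
      = ((primitive ?g (real n + z) - primitive ?g (real n))
          - (primitive ?g z - primitive ?g 0)) / real n" for n
    using shifted integral_eq_primitive_diff[OF int, of 0 "real n"]
    by (simp add: average_def diff_divide_distrib)
  have bound: "\<bar>average n (\<tau> z \<omega>) - average n \<omega>\<bar> \<le> 2 * R * \<bar>z\<bar> / real n" for n
  proof -
    have "\<bar>(primitive ?g (real n + z) - primitive ?g (real n)) - (primitive ?g z - primitive ?g 0)\<bar>
        \<le> 2 * R * \<bar>z\<bar>"
      using primitive_lipschitz[OF int bounded[OF \<omega>], of "real n + z" "real n"]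
        primitive_lipschitz[OF int bounded[OF \<omega>], of z 0]
      by (simp add: abs_le_iff)
    then show ?thesis unfolding diff abs_divide by (simp add: divide_right_mono)
  qed
  have "(\<lambda>n. 2 * R * \<bar>z\<bar> / real n) \<longlonglongrightarrow> 0"
    by (intro tendsto_divide_0[OF tendsto_const]
        filterlim_at_top_imp_at_infinity[OF filterlim_real_sequentially])
  then show ?thesis
    by (rule Lim_null_comparison[rotated]) (simp add: bound)
qed

text \<open>The averages along \<open>\<tau> 1\<close> need not converge to the mean, since \<open>\<tau> 1\<close> alone need not be
  ergodic; but the event that they exceed a level infinitely often is invariant under the whole
  group, because shifting the path by \<open>z\<close> changes the averages by \<open>O(1/n)\<close>.\<close>

definition exceed_set :: "real \<Rightarrow> 'a set" where
  "exceed_set a = {\<omega> \<in> space M. \<exists>q::rat. a < of_rat q \<and> (\<forall>N. \<exists>n\<ge>N. of_rat q < average n \<omega>)}"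

lemma exceed_set_measurable[measurable]: "exceed_set a \<in> sets M"
  unfolding exceed_set_def by measurable

lemma exceed_set_shift:
  assumes \<omega>: "\<omega> \<in> space M" and exceed: "\<omega> \<in> exceed_set a"
  shows "\<tau> z \<omega> \<in> exceed_set a"
proof -
  obtain q :: rat where q: "a < of_rat q" "\<forall>N. \<exists>n\<ge>N. of_rat q < average n \<omega>"
    using exceed by (auto simp: exceed_set_def)
  obtain q' :: rat where q': "a < of_rat q'" "of_rat q' < (of_rat q :: real)"
    using of_rat_dense[OF q(1)] by blast
  obtain N0 where N0: "\<forall>n\<ge>N0. \<bar>average n (\<tau> z \<omega>) - average n \<omega>\<bar> < of_rat q - of_rat q'"
    using average_shift_tendsto_0[OF \<omega>, of z] q'(2)
    unfolding tendsto_iff eventually_sequentially dist_real_def by force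
  have "\<exists>n\<ge>N. of_rat q' < average n (\<tau> z \<omega>)" for N
  proof -
    obtain n where "n \<ge> max N N0" "of_rat q < average n \<omega>" using q(2) by blast
    then show ?thesis using N0 by (intro exI[of _ n]) force
  qed
  then show ?thesis using q' ergodic_group_space[OF ergodic \<omega>] by (auto simp: exceed_set_def)
qed

lemma exceed_set_invariant: "\<omega> \<in> space M \<Longrightarrow> \<tau> z \<omega> \<in> exceed_set a \<longleftrightarrow> \<omega> \<in> exceed_set a"
  using exceed_set_shift[of "\<tau> z \<omega>" a "- z"] exceed_set_shift[of \<omega> a z]
  by (auto simp: ergodic_group_space[OF ergodic] ergodic_group_add[OF ergodic, symmetric]
      ergodic_group_0[OF ergodic])

lemma exceed_set_null:
  assumes "mean < a"
  shows "exceed_set a \<in> null_sets M"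
proof -
  have "measure M (exceed_set a) \<noteq> 1"
  proof
    assume "measure M (exceed_set a) = 1"
    then have "AE \<omega> in M. \<omega> \<in> exceed_set a" by (rule AE_prob_1)
    then have "AE \<omega> in M. \<exists>k\<ge>1. a * real k < (\<Sum>j<k. unit_integral ((\<tau> 1 ^^ j) \<omega>))"
      using AE_space
    proof eventually_elim
      case (elim \<omega>)
      then obtain q :: rat and n where "a < of_rat q" "n \<ge> 1" "of_rat q < average n \<omega>"
        by (force simp: exceed_set_def)
      then have "a * real n < of_rat q * real n" by (intro mult_strict_right_mono) auto
      also have "\<dots> < integral {0..real n} (\<lambda>s. f s \<omega>)"
        using \<open>n \<ge> 1\<close> \<open>of_rat q < average n \<omega>\<close> by (simp add: average_def field_simps)
      finally show ?case
        using integral_eq_sum_unit_integrals[OF elim(2), of n] \<open>n \<ge> 1\<close> by auto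
    qed
    then have "a \<le> mean" unfolding mean_def
      using unit_shift.mean_ge_of_AE_partial_sums_exceed[OF unit_integral_measurable unit_integral_bounded]
      by blast
    then show False using assms by simp
  qed
  then have "measure M (exceed_set a) = 0"
    using ergodic_group_invariant_set[OF ergodic exceed_set_measurable exceed_set_invariant]
    by blast
  then show ?thesis by (simp add: emeasure_eq_measure null_sets_def)
qed

lemma AE_eventually_average_le:
  "AE \<omega> in M. \<forall>q::rat. mean < of_rat q \<longrightarrow> (\<forall>\<^sub>F n in sequentially. average n \<omega> \<le> of_rat q)"
proof (subst AE_all_countable, intro allI)
  fix q :: rat
  show "AE \<omega> in M. mean < of_rat q \<longrightarrow> (\<forall>\<^sub>F n in sequentially. average n \<omega> \<le> of_rat q)"
  proof (cases "mean < of_rat q")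
    case True
    define a where "a = (mean + of_rat q) / 2"
    have a: "mean < a" "a < of_rat q" using True by (auto simp: a_def)
    show ?thesis
      using AE_not_in[OF exceed_set_null[OF a(1)]] AE_space
    proof eventually_elim
      case (elim \<omega>)
      then have "\<not> (\<forall>N. \<exists>n\<ge>N. of_rat q < average n \<omega>)"
        using a(2) by (auto simp: exceed_set_def)
      then show ?case by (auto simp: eventually_sequentially not_less)
    qed
  qed simp
qed

end

lemma (in ergodic_stationary_process) averages_converge:
  "AE \<omega> in M. ((\<lambda>t. integral {0..t} (\<lambda>s. f s \<omega>) / t) \<longlongrightarrow> mean) at_top"
proof -
  interpret neg: ergodic_stationary_process M \<tau> "\<lambda>s \<omega>. - f s \<omega>" R
  proof
    show "(\<lambda>(\<omega>, s). - f s \<omega>) \<in> borel_measurable (M \<Otimes>\<^sub>M lborel)"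
      using measurable by (simp add: split_beta')
  qed (use ergodic bounded stationary in auto)
  have neg_average: "neg.average n \<omega> = - average n \<omega>" for n \<omega>
    by (simp add: neg.average_def average_def)
  have neg_mean: "neg.mean = - mean"
    by (simp add: neg.mean_def mean_def neg.unit_integral_def unit_integral_def)
  show ?thesis
    using AE_eventually_average_le neg.AE_eventually_average_le AE_space
  proof eventually_elim
    case (elim \<omega>)
    have "(\<lambda>n. average n \<omega>) \<longlonglongrightarrow> mean"
    proof (rule order_tendstoI)
      fix a assume "a < mean"
      then obtain q :: rat where q: "- mean < of_rat q" "of_rat q < - a"
        using of_rat_dense[of "- mean" "- a"] by auto
      then show "\<forall>\<^sub>F n in sequentially. a < average n \<omega>"
        using elim(2) by (auto simp: neg_average neg_mean elim!: eventually_mono)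
    next
      fix a assume "mean < a"
      then obtain q :: rat where q: "mean < of_rat q" "of_rat q < a"
        using of_rat_dense by blast
      then show "\<forall>\<^sub>F n in sequentially. average n \<omega> < a"
        using elim(1) by (auto elim!: eventually_mono)
    qed
    then show ?case
      using elim(3) bounded
      by (intro averages_at_top_of_sequentially[where R=R] path_integrable) (auto simp: average_def)
  qed
qed

section \<open>Viscosity subsolutions in one dimension\<close>

lemma glob_lipE:
  assumes "glob_lip v"
  obtains L where "0 \<le> L" "\<And>x y. \<bar>v x - v y\<bar> \<le> L * \<bar>x - y\<bar>"
  using assms unfolding glob_lip_def lipschitz_on_def dist_real_def by auto

lemma glob_lipI:
  assumes "0 \<le> L" "\<And>x y. \<bar>v x - v y\<bar> \<le> L * \<bar>x - y\<bar>"
  shows "glob_lip v"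
  using assms unfolding glob_lip_def lipschitz_on_def dist_real_def by auto

lemma glob_lip_continuous: "glob_lip v \<Longrightarrow> continuous_on UNIV v"
  unfolding glob_lip_def using lipschitz_on_continuous_on by blast

lemma visc_subD:
  assumes "visc_sub F v mu"
    and "\<And>y. (\<phi> has_real_derivative \<phi>' y) (at y)" and "continuous_on UNIV \<phi>'"
    and "0 < e" and "\<And>y. \<bar>y - y0\<bar> < e \<Longrightarrow> v y - \<phi> y \<le> v y0 - \<phi> y0"
  shows "F (\<phi>' y0) y0 \<le> mu"
  using assms unfolding visc_sub_def by blast

lemma lipschitz_minus_quadratic_attains_max:
  fixes u :: "real \<Rightarrow> real"
  assumes cont: "continuous_on S u" and "closed S" and "s \<in> S" and "0 \<le> L" and "0 < K"
    and lip: "\<And>r. r \<in> S \<Longrightarrow> \<bar>u r - u s\<bar> \<le> L * \<bar>r - s\<bar>"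
  obtains r0 where "r0 \<in> S" "\<bar>r0 - s\<bar> \<le> L / K"
    "\<And>r. r \<in> S \<Longrightarrow> u r - K * (r - s)\<^sup>2 \<le> u r0 - K * (r0 - s)\<^sup>2"
proof -
  define h where "h r = u r - K * (r - s)\<^sup>2" for r
  define C where "C = S \<inter> cball s (L / K)"
  have "compact C" unfolding C_def using \<open>closed S\<close> by (intro closed_Int_compact) auto
  moreover have "s \<in> C" using assms by (simp add: C_def)
  moreover have "continuous_on C h"
    unfolding h_def C_def by (intro continuous_intros continuous_on_subset[OF cont]) auto
  ultimately obtain r0 where r0: "r0 \<in> C" "\<And>r. r \<in> C \<Longrightarrow> h r \<le> h r0"
    using continuous_attains_sup[of C h] by blast
  have "h r \<le> h r0" if "r \<in> S" for r
  proof (cases "\<bar>r - s\<bar> \<le> L / K")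
    case True
    then show ?thesis using r0(2) that by (simp add: C_def dist_real_def abs_minus_commute)
  next
    case False
    then have "L < K * \<bar>r - s\<bar>" using \<open>0 < K\<close> by (simp add: field_simps)
    then have "\<bar>r - s\<bar> * (L - K * \<bar>r - s\<bar>) < 0"
      using False \<open>0 \<le> L\<close> \<open>0 < K\<close> by (intro mult_pos_neg) (auto simp: field_simps)
    moreover have "h r - h s = (u r - u s) - K * \<bar>r - s\<bar>\<^sup>2" by (simp add: h_def)
    moreover have "(u r - u s) - K * \<bar>r - s\<bar>\<^sup>2 \<le> \<bar>r - s\<bar> * (L - K * \<bar>r - s\<bar>)"
      using lip[OF that] by (simp add: algebra_simps power2_eq_square)
    ultimately show ?thesis using r0(2)[OF \<open>s \<in> C\<close>] by linarith
  qed
  then show ?thesis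
    using that r0(1) by (auto simp: h_def C_def dist_real_def abs_minus_commute)
qed

lemma modulus_tendsto_0:
  assumes "modulus w"
  shows "(w \<longlongrightarrow> 0) (at_right 0)"
proof -
  have "continuous_on {0..} w" using assms by (simp add: modulus_def)
  then have "(w \<longlongrightarrow> w 0) (at 0 within {0..})"
    unfolding continuous_on_def by simp
  then have "(w \<longlongrightarrow> w 0) (at_right 0)"
    by (rule tendsto_within_subset) auto
  then show ?thesis using assms by (simp add: modulus_def)
qed

lemma zero_subsolution:
  assumes "\<And>s. G 0 s \<le> lam"
  shows "glob_lip (\<lambda>_. 0)" and "visc_sub G (\<lambda>_. 0) lam"
proof -
  show "glob_lip (\<lambda>_. 0)" by (rule glob_lipI[of 0]) auto
  show "visc_sub G (\<lambda>_. 0) lam"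
    unfolding visc_sub_def
  proof (intro conjI allI impI continuous_on_const)
    fix \<phi> \<phi>' y0
    assume "(\<forall>y. (\<phi> has_real_derivative \<phi>' y) (at y)) \<and> continuous_on UNIV \<phi>' \<and>
        (\<exists>e>0. \<forall>y. \<bar>y - y0\<bar> < e \<longrightarrow> (0::real) - \<phi> y \<le> 0 - \<phi> y0)"
    then obtain e where "(\<phi> has_real_derivative \<phi>' y0) (at y0)" "e > 0"
      "\<forall>y. \<bar>y0 - y\<bar> < e \<longrightarrow> \<phi> y0 \<le> \<phi> y"
      by (auto simp: abs_minus_commute)
    then have "\<phi>' y0 = 0" by (intro DERIV_local_min) auto
    then show "G (\<phi>' y0) y0 \<le> lam" using assms by simp
  qed
qed

lemma glob_lip_reflect:
  assumes "glob_lip v"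
  shows "glob_lip (\<lambda>s. v (- s))"
proof -
  obtain L where L: "0 \<le> L" "\<And>x y. \<bar>v x - v y\<bar> \<le> L * \<bar>x - y\<bar>" using glob_lipE[OF assms] by blast
  show ?thesis
  proof (rule glob_lipI[OF L(1)])
    fix x y
    have "\<bar>v (- x) - v (- y)\<bar> \<le> L * \<bar>- x - - y\<bar>" by (rule L(2))
    then show "\<bar>v (- x) - v (- y)\<bar> \<le> L * \<bar>x - y\<bar>" by (simp add: abs_minus_commute)
  qed
qed

lemma visc_sub_reflect:
  assumes "visc_sub G v mu"
  shows "visc_sub (\<lambda>p s. G (- p) (- s)) (\<lambda>s. v (- s)) mu"
  unfolding visc_sub_def
proof (intro conjI allI impI)
  have "continuous_on UNIV v" using assms by (simp add: visc_sub_def)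
  then show "continuous_on UNIV (\<lambda>s. v (- s))"
    by (rule continuous_on_compose2) (auto intro: continuous_intros)
next
  fix \<phi> \<phi>' y0
  assume "(\<forall>y. (\<phi> has_real_derivative \<phi>' y) (at y)) \<and> continuous_on UNIV \<phi>' \<and>
      (\<exists>e>0. \<forall>y. \<bar>y - y0\<bar> < e \<longrightarrow> v (- y) - \<phi> y \<le> v (- y0) - \<phi> y0)"
  then obtain e where \<phi>: "\<And>y. (\<phi> has_real_derivative \<phi>' y) (at y)" "continuous_on UNIV \<phi>'"
    and e: "e > 0" "\<And>y. \<bar>y - y0\<bar> < e \<Longrightarrow> v (- y) - \<phi> y \<le> v (- y0) - \<phi> y0"
    by blast
  have "G ((\<lambda>y. - \<phi>' (- y)) (- y0)) (- y0) \<le> mu"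
  proof (rule visc_subD[OF assms _ _ e(1)])
    show "((\<lambda>x. \<phi> (- x)) has_real_derivative - \<phi>' (- y)) (at y)" for y
      using DERIV_mirror \<phi>(1) by (metis minus_minus)
    have "continuous_on UNIV (\<lambda>y. \<phi>' (- y))"
      by (rule continuous_on_compose2[OF \<phi>(2)]) (auto intro: continuous_intros)
    then show "continuous_on UNIV (\<lambda>y. - \<phi>' (- y))" by (rule continuous_on_minus)
    show "v y - \<phi> (- y) \<le> v (- y0) - \<phi> (- (- y0))" if "\<bar>y - - y0\<bar> < e" for y
      using e(2)[of "- y"] that by (simp add: abs_minus_commute add.commute)
  qed
  then show "G (- \<phi>' y0) (- y0) \<le> mu" by simp
qed

lemma convex_on_reflect:
  fixes g :: "real \<Rightarrow> real"
  assumes "convex_on UNIV g"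
  shows "convex_on UNIV (\<lambda>p. g (- p))"
  unfolding convex_on_def
proof (intro conjI ballI allI impI convex_UNIV)
  fix x y u v :: real assume "0 \<le> u" "0 \<le> v" "u + v = 1"
  moreover have "\<forall>x y. \<forall>u\<ge>0. \<forall>v\<ge>0. u + v = 1 \<longrightarrow> g (u *\<^sub>R x + v *\<^sub>R y) \<le> u * g x + v * g y"
    using assms unfolding convex_on_def by blast
  ultimately have "g (u *\<^sub>R (- x) + v *\<^sub>R (- y)) \<le> u * g (- x) + v * g (- y)"
    by blast
  then show "g (- (u *\<^sub>R x + v *\<^sub>R y)) \<le> u * g (- x) + v * g (- y)" by simp
qed

locale hamiltonian_1d =
  fixes G :: "real \<Rightarrow> real \<Rightarrow> real"
  assumes modulus_in_s: "\<exists>w. modulus w \<and> (\<forall>p x y. \<bar>G p y - G p x\<bar> \<le> w (\<bar>x - y\<bar> * (1 + \<bar>p\<bar>)))"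
    and coercive: "\<forall>K. \<exists>R. \<forall>p s. R \<le> \<bar>p\<bar> \<longrightarrow> K \<le> G p s"
    and convex_in_p: "\<forall>s. convex_on UNIV (\<lambda>p. G p s)"
    and min_at_0: "\<forall>p s. G 0 s \<le> G p s"
begin

lemma continuous_in_p: "continuous_on UNIV (\<lambda>p. G p s)"
  using convex_in_p by (intro convex_on_continuous) auto

lemma tendsto_in_s: "((\<lambda>s. G p s) \<longlongrightarrow> G p s0) (at s0)"
proof -
  obtain w where w: "modulus w" "\<And>x y. \<bar>G p y - G p x\<bar> \<le> w (\<bar>x - y\<bar> * (1 + \<bar>p\<bar>))"
    using modulus_in_s by blast
  have w_cont: "continuous_on {0..} w" using w(1) by (simp add: modulus_def)
  have "((\<lambda>s. \<bar>s0 - s\<bar> * (1 + \<bar>p\<bar>)) \<longlongrightarrow> \<bar>s0 - s0\<bar> * (1 + \<bar>p\<bar>)) (at s0)"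
    by (intro tendsto_intros)
  then have "((\<lambda>s. w (\<bar>s0 - s\<bar> * (1 + \<bar>p\<bar>))) \<longlongrightarrow> w (\<bar>s0 - s0\<bar> * (1 + \<bar>p\<bar>))) (at s0)"
    by (rule continuous_on_tendsto_compose[OF w_cont]) auto
  then have "((\<lambda>s. w (\<bar>s0 - s\<bar> * (1 + \<bar>p\<bar>))) \<longlongrightarrow> 0) (at s0)"
    using w(1) by (simp add: modulus_def)
  then have "((\<lambda>s. G p s - G p s0) \<longlongrightarrow> 0) (at s0)"
    by (rule Lim_null_comparison[rotated]) (use w(2) in auto)
  then show ?thesis by (simp add: LIM_zero_iff)
qed

text \<open>Test with the paraboloid \<open>K (r - s)\<^sup>2\<close> at a maximum point \<open>r0\<close> of \<open>v - K (\<cdot> - s)\<^sup>2\<close>;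
  choosing \<open>K\<close> large forces \<open>r0\<close> close to \<open>s\<close>, and \<open>G 0\<close> is the minimum in \<open>p\<close>.\<close>

lemma subsolution_level_ge:
  assumes v: "glob_lip v" "visc_sub G v lam"
  shows "G 0 s \<le> lam"
proof (rule ccontr)
  assume "\<not> G 0 s \<le> lam"
  obtain w where w: "modulus w" "\<And>p x y. \<bar>G p y - G p x\<bar> \<le> w (\<bar>x - y\<bar> * (1 + \<bar>p\<bar>))"
    using modulus_in_s by blast
  have "\<forall>\<^sub>F t in at_right 0. w t < G 0 s - lam"
    using order_tendstoD(2)[OF modulus_tendsto_0[OF w(1)]] \<open>\<not> G 0 s \<le> lam\<close> by simp
  then obtain d where d: "0 < d" "\<And>t. 0 < t \<Longrightarrow> t < d \<Longrightarrow> w t < G 0 s - lam"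
    unfolding eventually_at_right_field by auto
  obtain Lv where Lv: "0 \<le> Lv" "\<And>x y. \<bar>v x - v y\<bar> \<le> Lv * \<bar>x - y\<bar>"
    using glob_lipE[OF v(1)] by blast
  define K where "K = (Lv + 1) / d"
  have K: "0 < K" "Lv / K < d" using d Lv by (auto simp: K_def field_simps)
  obtain r0 where r0: "\<bar>r0 - s\<bar> \<le> Lv / K" "\<And>r. v r - K * (r - s)\<^sup>2 \<le> v r0 - K * (r0 - s)\<^sup>2"
    using lipschitz_minus_quadratic_attains_max[of UNIV v s Lv K] Lv K glob_lip_continuous[OF v(1)]
    by auto
  have "G ((\<lambda>r. 2 * K * (r - s)) r0) r0 \<le> lam"
    by (rule visc_subD[OF v(2), where \<phi>="\<lambda>r. K * (r - s)\<^sup>2" and e=1])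
       (use r0(2) in \<open>auto intro!: derivative_eq_intros continuous_intros\<close>)
  then have "G 0 r0 \<le> lam" using min_at_0 order_trans by blast
  moreover have "G 0 s - G 0 r0 < G 0 s - lam"
  proof (cases "r0 = s")
    case False
    then have "G 0 s - G 0 r0 \<le> w \<bar>r0 - s\<bar>" using w(2)[of 0 r0 s]
      by (simp add: abs_minus_commute abs_le_iff)
    also have "\<dots> < G 0 s - lam" using d(2) r0(1) K False by simp
    finally show ?thesis .
  qed (use \<open>\<not> G 0 s \<le> lam\<close> in simp)
  ultimately show False by simp
qed

lemma reflected: "hamiltonian_1d (\<lambda>p s. G (- p) (- s))"
proof
  obtain w where w: "modulus w" "\<And>p x y. \<bar>G p y - G p x\<bar> \<le> w (\<bar>x - y\<bar> * (1 + \<bar>p\<bar>))"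
    using modulus_in_s by blast
  have "\<bar>G (- p) (- y) - G (- p) (- x)\<bar> \<le> w (\<bar>x - y\<bar> * (1 + \<bar>p\<bar>))" for p x y
    using w(2)[of "- p" "- y" "- x"] by (simp add: abs_minus_commute)
  then show "\<exists>w. modulus w \<and> (\<forall>p x y. \<bar>G (- p) (- y) - G (- p) (- x)\<bar> \<le> w (\<bar>x - y\<bar> * (1 + \<bar>p\<bar>)))"
    using w(1) by blast
  show "\<forall>K. \<exists>R. \<forall>p s. R \<le> \<bar>p\<bar> \<longrightarrow> K \<le> G (- p) (- s)"
  proof
    fix K
    obtain R where R: "\<And>p s. R \<le> \<bar>p\<bar> \<Longrightarrow> K \<le> G p s" using coercive by blast
    have "K \<le> G (- p) (- s)" if "R \<le> \<bar>p\<bar>" for p s using R[of "- p" "- s"] that by simp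
    then show "\<exists>R. \<forall>p s. R \<le> \<bar>p\<bar> \<longrightarrow> K \<le> G (- p) (- s)" by blast
  qed
  show "\<forall>s. convex_on UNIV (\<lambda>p. G (- p) (- s))"
    using convex_in_p convex_on_reflect by blast
  show "\<forall>p s. G (- 0) (- s) \<le> G (- p) (- s)"
    using min_at_0 by simp
qed

end

section \<open>The metric function of a convex Hamiltonian\<close>

lemma convex_below_level_before_root:
  fixes g :: "real \<Rightarrow> real"
  assumes g: "convex_on UNIV g" and "g 0 < mu" "g \<beta> = mu" and p: "0 \<le> p" "p < \<beta>"
  shows "g p < mu"
proof -
  define t where "t = p / \<beta>"
  have t: "0 \<le> t" "t < 1" and "p = (1 - t) *\<^sub>R 0 + t *\<^sub>R \<beta>"
    using p by (auto simp: t_def field_simps)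
  then have "g p \<le> (1 - t) * g 0 + t * g \<beta>"
    using convex_onD[OF g, of t 0 \<beta>] by simp
  also have "\<dots> < (1 - t) * mu + t * mu"
    using t assms(2,3) by (simp add: mult_strict_left_mono)
  finally show ?thesis by (simp add: algebra_simps)
qed

lemma convex_above_level_after_root:
  fixes g :: "real \<Rightarrow> real"
  assumes g: "convex_on UNIV g" and "g 0 < mu" "g \<beta> = mu" and p: "0 \<le> \<beta>" "\<beta> < p"
  shows "mu < g p"
proof (rule ccontr)
  assume "\<not> mu < g p"
  define t where "t = \<beta> / p"
  have t: "0 \<le> t" "t < 1" and "\<beta> = (1 - t) *\<^sub>R 0 + t *\<^sub>R p"
    using p by (auto simp: t_def field_simps)
  then have "mu \<le> (1 - t) * g 0 + t * g p"
    using convex_onD[OF g, of t 0 p] assms(3) by simp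
  also have "\<dots> < (1 - t) * mu + t * mu"
    using t assms(2) \<open>\<not> mu < g p\<close>
    by (intro add_less_le_mono mult_strict_left_mono mult_left_mono) auto
  finally show False by (simp add: algebra_simps)
qed

locale hamiltonian_1d_level = hamiltonian_1d +
  fixes mu :: real
  assumes below_level: "\<And>s. G 0 s < mu"
begin

text \<open>The positive root of \<open>G (\<cdot>) s = mu\<close>, written as the length of a sublevel set so that its
  measurability in \<open>(\<omega>, s)\<close> follows from Tonelli's theorem in the random setting.\<close>

definition root :: "real \<Rightarrow> real" where
  "root s = measure lborel {p. 0 \<le> p \<and> G p s < mu}"

lemma root_props:
  shows root_nonneg: "0 \<le> root s" and G_root: "G (root s) s = mu"
    and G_below_root: "0 \<le> p \<Longrightarrow> p < root s \<Longrightarrow> G p s < mu"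
    and G_above_root: "root s < p \<Longrightarrow> mu < G p s"
proof -
  obtain R where R: "\<And>p. R \<le> \<bar>p\<bar> \<Longrightarrow> mu \<le> G p s" using coercive by blast
  have "G 0 s \<le> mu" "mu \<le> G (max R 0) s" using below_level[of s] R[of "max R 0"] by auto
  then obtain \<beta> where \<beta>: "0 \<le> \<beta>" "G \<beta> s = mu"
    using IVT'[of "\<lambda>p. G p s" 0 mu "max R 0"] continuous_on_subset[OF continuous_in_p] by force
  have below: "G p s < mu" if "0 \<le> p" "p < \<beta>" for p
    using convex_below_level_before_root[OF _ below_level \<beta>(2) that] convex_in_p by blast
  have above: "mu < G p s" if "\<beta> < p" for p
    using convex_above_level_after_root[OF _ below_level \<beta>(2) \<beta>(1) that] convex_in_p by blast
  have "{p. 0 \<le> p \<and> G p s < mu} = {0..<\<beta>}"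
  proof (intro set_eqI iffI)
    fix p assume "p \<in> {p. 0 \<le> p \<and> G p s < mu}"
    then show "p \<in> {0..<\<beta>}" using above[of p] \<beta>(2) by (cases rule: linorder_cases[of p \<beta>]) auto
  qed (use below in auto)
  then have "root s = \<beta>" using \<beta>(1) by (simp add: root_def)
  then show "0 \<le> root s" "G (root s) s = mu"
    "0 \<le> p \<Longrightarrow> p < root s \<Longrightarrow> G p s < mu" "root s < p \<Longrightarrow> mu < G p s"
    using \<beta> below above by auto
qed

lemma root_bounded: obtains R where "0 \<le> R" "\<And>s. root s \<le> R"
proof -
  obtain R where R: "\<And>p s. R \<le> \<bar>p\<bar> \<Longrightarrow> mu + 1 \<le> G p s" using coercive by blast
  have "root s \<le> max R 0" for s
    using R[of "root s" s] G_root[of s] root_nonneg[of s] by (cases "R \<le> root s") auto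
  then show ?thesis using that[of "max R 0"] by auto
qed

lemma root_continuous: "continuous_on UNIV root"
proof -
  have "(root \<longlongrightarrow> root s0) (at s0)" for s0
  proof (rule order_tendstoI)
    fix a assume "a < root s0"
    show "\<forall>\<^sub>F s in at s0. a < root s"
    proof (cases "a < 0")
      case True
      then show ?thesis using root_nonneg by (auto intro: always_eventually less_le_trans)
    next
      case False
      then have "G a s0 < mu" using G_below_root \<open>a < root s0\<close> by simp
      then have "\<forall>\<^sub>F s in at s0. G a s < mu" using order_tendstoD(2)[OF tendsto_in_s] by blast
      then show ?thesis
      proof (rule eventually_mono)
        fix s assume "G a s < mu"
        then show "a < root s"
          using G_above_root[of s a] G_root[of s]
          by (cases rule: linorder_cases[of a "root s"]) auto
      qed
    qed
  next
    fix a assume "root s0 < a"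
    then have "mu < G a s0" by (rule G_above_root)
    then have "\<forall>\<^sub>F s in at s0. mu < G a s" using order_tendstoD(1)[OF tendsto_in_s] by blast
    then show "\<forall>\<^sub>F s in at s0. root s < a"
    proof (rule eventually_mono)
      fix s assume "mu < G a s"
      moreover have "0 \<le> a" using \<open>root s0 < a\<close> root_nonneg[of s0] by simp
      ultimately show "root s < a"
        using G_below_root[of a s] G_root[of s] by (cases rule: linorder_cases[of a "root s"]) auto
    qed
  qed
  then show ?thesis by (simp add: continuous_on_def continuous_at_imp_continuous_within isCont_def)
qed

lemma root_integrable: "root integrable_on {a..b}"
  by (rule integrable_continuous_real) (rule continuous_on_subset[OF root_continuous], simp)

lemma primitive_root_lipschitz:
  obtains R where "0 \<le> R" "\<And>u v. \<bar>primitive root u - primitive root v\<bar> \<le> R * \<bar>u - v\<bar>"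
proof -
  obtain R where "0 \<le> R" "\<And>s. root s \<le> R" using root_bounded by blast
  then show ?thesis
    using that primitive_lipschitz[OF root_integrable, of R] root_nonneg by auto
qed

lemma primitive_root_subsolution: "glob_lip (primitive root)" "visc_sub G (primitive root) mu"
proof -
  obtain R where "0 \<le> R" "\<And>u v. \<bar>primitive root u - primitive root v\<bar> \<le> R * \<bar>u - v\<bar>"
    using primitive_root_lipschitz by blast
  then show "glob_lip (primitive root)" by (rule glob_lipI)
  then have "continuous_on UNIV (primitive root)" by (rule glob_lip_continuous)
  then show "visc_sub G (primitive root) mu"
    unfolding visc_sub_def
  proof (intro conjI allI impI)
    fix \<phi> \<phi>' y0
    assume "(\<forall>y. (\<phi> has_real_derivative \<phi>' y) (at y)) \<and> continuous_on UNIV \<phi>' \<and>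
        (\<exists>e>0. \<forall>y. \<bar>y - y0\<bar> < e \<longrightarrow> primitive root y - \<phi> y \<le> primitive root y0 - \<phi> y0)"
    then obtain e where \<phi>: "(\<phi> has_real_derivative \<phi>' y0) (at y0)"
      and e: "e > 0" "\<forall>y. \<bar>y0 - y\<bar> < e \<longrightarrow> primitive root y - \<phi> y \<le> primitive root y0 - \<phi> y0"
      by (auto simp: abs_minus_commute)
    have "((\<lambda>y. primitive root y - \<phi> y) has_real_derivative root y0 - \<phi>' y0) (at y0)"
      using primitive_has_real_derivative[OF root_continuous] \<phi> by (intro derivative_intros)
    then have "root y0 - \<phi>' y0 = 0" using e by (rule DERIV_local_max)
    then show "G (\<phi>' y0) y0 \<le> mu" using G_root[of y0] by simp
  qed
qed

lemma tilted_difference_no_max: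
  assumes v: "visc_sub G v mu" and "0 < \<delta>" "0 \<le> K" "x < s0"
    and max: "\<And>s. x \<le> s \<Longrightarrow> v s - primitive root s - \<delta> * s - K * (s - x)\<^sup>2
      \<le> v s0 - primitive root s0 - \<delta> * s0 - K * (s0 - x)\<^sup>2"
  shows False
proof -
  define \<phi> where "\<phi> s = primitive root s + \<delta> * s + K * (s - x)\<^sup>2" for s
  have "G ((\<lambda>s. root s + \<delta> + 2 * K * (s - x)) s0) s0 \<le> mu"
  proof (rule visc_subD[OF v, where \<phi>=\<phi> and e="s0 - x"])
    show "(\<phi> has_real_derivative root s + \<delta> + 2 * K * (s - x)) (at s)" for s
      unfolding \<phi>_def
      using primitive_has_real_derivative[OF root_continuous] by (auto intro!: derivative_eq_intros)
    show "continuous_on UNIV (\<lambda>s. root s + \<delta> + 2 * K * (s - x))"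
      by (intro continuous_intros root_continuous)
    show "v s - \<phi> s \<le> v s0 - \<phi> s0" if "\<bar>s - s0\<bar> < s0 - x" for s
      using max[of s] that by (simp add: \<phi>_def algebra_simps)
  qed (use \<open>x < s0\<close> in simp)
  moreover have "root s0 < root s0 + \<delta> + 2 * K * (s0 - x)"
    using assms(2-4) by (simp add: add_pos_nonneg)
  ultimately show False using G_above_root[of s0] by (simp add: not_le[symmetric])
qed

text \<open>If a subsolution \<open>v\<close> grew faster than \<open>primitive root\<close> on \<open>[x, y]\<close>, then a maximum point
  \<open>s0 > x\<close> of \<open>v - primitive root - \<delta> s - K (s - x)\<^sup>2\<close> on \<open>[x, \<infinity>)\<close> would give a test function
  whose slope at \<open>s0\<close> exceeds \<open>root s0\<close>.\<close>

lemma subsolution_increment_le: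
  assumes v: "glob_lip v" "visc_sub G v mu" and "x \<le> y"
  shows "v y - v x \<le> primitive root y - primitive root x"
proof (rule ccontr)
  define W where "W = primitive root"
  define D where "D = (v y - v x) - (W y - W x)"
  assume "\<not> ?thesis"
  then have D: "0 < D" "x < y" using \<open>x \<le> y\<close> by (auto simp: D_def W_def less_le)
  define \<delta> where "\<delta> = D / (2 * (y - x))"
  define K where "K = D / (4 * (y - x)\<^sup>2)"
  have \<delta>K: "0 < \<delta>" "0 < K" using D by (auto simp: \<delta>_def K_def)
  define u where "u s = v s - W s - \<delta> * s" for s
  obtain Lv where Lv: "0 \<le> Lv" "\<And>a b. \<bar>v a - v b\<bar> \<le> Lv * \<bar>a - b\<bar>" using glob_lipE[OF v(1)] by blast
  obtain R where R: "0 \<le> R" "\<And>a b. \<bar>W a - W b\<bar> \<le> R * \<bar>a - b\<bar>"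
    unfolding W_def using primitive_root_lipschitz by blast
  have u_lip: "\<bar>u r - u x\<bar> \<le> (Lv + R + \<delta>) * \<bar>r - x\<bar>" for r
  proof -
    have "\<bar>u r - u x\<bar> = \<bar>(v r - v x) + (W x - W r) + \<delta> * (x - r)\<bar>"
      by (rule arg_cong[where f=abs]) (simp add: u_def algebra_simps)
    also have "\<dots> \<le> \<bar>v r - v x\<bar> + \<bar>W x - W r\<bar> + \<bar>\<delta> * (x - r)\<bar>"
      by (rule order_trans[OF abs_triangle_ineq add_right_mono[OF abs_triangle_ineq]])
    also have "\<dots> \<le> Lv * \<bar>r - x\<bar> + R * \<bar>r - x\<bar> + \<delta> * \<bar>r - x\<bar>"
      using Lv(2)[of r x] R(2)[of x r] \<delta>K
      by (intro add_mono) (auto simp: abs_mult abs_minus_commute)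
    finally show ?thesis by (simp add: algebra_simps)
  qed
  have "continuous_on UNIV v" "continuous_on UNIV W"
    using glob_lip_continuous v(1) primitive_root_subsolution(1) by (auto simp: W_def)
  then have "continuous_on UNIV u" unfolding u_def by (intro continuous_intros)
  then have "continuous_on {x..} u" by (rule continuous_on_subset) simp
  obtain s0 where s0: "x \<le> s0" "\<And>s. x \<le> s \<Longrightarrow> u s - K * (s - x)\<^sup>2 \<le> u s0 - K * (s0 - x)\<^sup>2"
  proof (rule lipschitz_minus_quadratic_attains_max[of "{x..}" u x "Lv + R + \<delta>" K])
    show "\<bar>u r - u x\<bar> \<le> (Lv + R + \<delta>) * \<bar>r - x\<bar>" if "r \<in> {x..}" for r by (rule u_lip)
  qed (use \<open>continuous_on {x..} u\<close> Lv(1) R(1) \<delta>K that in auto)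
  have cancel: "D / (c * z) * z = D / c" if "z \<noteq> 0" for c z :: real using that by simp
  have "\<delta> * (y - x) = D / 2" unfolding \<delta>_def using cancel[of "y - x" 2] D by simp
  moreover have "K * (y - x)\<^sup>2 = D / 4" unfolding K_def using cancel[of "(y - x)\<^sup>2" 4] D by simp
  ultimately have "u y - K * (y - x)\<^sup>2 = u x + D / 4"
    unfolding u_def by (simp only: right_diff_distrib) (use D_def in linarith)
  then have "x < s0" using s0 D \<open>x \<le> y\<close> by (cases "s0 = x") fastforce+
  then show False
    using tilted_difference_no_max[OF v(2) \<delta>K(1) less_imp_le[OF \<delta>K(2)]] s0(2)
    unfolding u_def W_def by blast
qed

lemma Sup_subsolution_increments:
  assumes "x \<le> y"
  shows "Sup {v y - v x | v. glob_lip v \<and> visc_sub G v mu} = primitive root y - primitive root x"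
  by (rule cSup_eq_maximum) (use primitive_root_subsolution subsolution_increment_le assms in auto)

end

definition reflect_hamiltonian :: "(real \<Rightarrow> real \<Rightarrow> 'a \<Rightarrow> real) \<Rightarrow> real \<Rightarrow> real \<Rightarrow> 'a \<Rightarrow> real" where
  "reflect_hamiltonian Hf = (\<lambda>p s \<omega>. Hf (- p) (- s) \<omega>)"

lemma subsols_reflect:
  assumes "v \<in> subsols Hf mu \<omega>"
  shows "(\<lambda>s. v (- s)) \<in> subsols (reflect_hamiltonian Hf) mu \<omega>"
  using assms glob_lip_reflect visc_sub_reflect[of "\<lambda>p s. Hf p s \<omega>" v mu]
  by (simp add: subsols_def reflect_hamiltonian_def)

lemma metric_fn_reflect:
  "metric_fn mu Hf y x \<omega> = metric_fn mu (reflect_hamiltonian Hf) (- y) (- x) \<omega>"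
proof -
  have "reflect_hamiltonian (reflect_hamiltonian Hf) = Hf"
    by (simp add: reflect_hamiltonian_def)
  then have "{v y - v x | v. v \<in> subsols Hf mu \<omega>}
      = {u (- y) - u (- x) | u. u \<in> subsols (reflect_hamiltonian Hf) mu \<omega>}"
    using subsols_reflect[of _ Hf mu \<omega>] subsols_reflect[of _ "reflect_hamiltonian Hf" mu \<omega>]
    by (auto 0 3 intro: exI[of _ "\<lambda>s. _ (- s)"])
  then show ?thesis by (simp add: metric_fn_def)
qed

section \<open>The critical value\<close>

lemma H1to6_H_meas_H3: "H1to6 M Hf \<Longrightarrow> H_meas M Hf" "H1to6 M Hf \<Longrightarrow> H3 M Hf"
  by (simp_all add: H1to6_def)

lemma H1to6_hamiltonian_1d:
  assumes "H1to6 M Hf" and "\<omega> \<in> space M"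
  shows "hamiltonian_1d (\<lambda>p s. Hf p s \<omega>)"
  using assms unfolding H1to6_def H3_def H4_def H5_def H6_def hamiltonian_1d_def by metis

lemma H2_H0_bounded:
  assumes "H2 M Hf"
  obtains C where "\<And>s \<omega>. \<omega> \<in> space M \<Longrightarrow> \<bar>Hf 0 s \<omega>\<bar> \<le> C"
proof -
  obtain c0 C0 \<gamma> where pos: "0 < c0" "0 < C0"
    and bounds: "\<And>s \<omega>. \<omega> \<in> space M \<Longrightarrow> - c0 * \<bar>\<gamma>\<bar> \<le> Hf 0 s \<omega> \<and> Hf 0 s \<omega> \<le> C0 * \<bar>\<gamma>\<bar>"
    using assms unfolding H2_def by (metis add_0)
  have "0 \<le> c0 * \<bar>\<gamma>\<bar>" "0 \<le> C0 * \<bar>\<gamma>\<bar>" using pos by simp_all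
  then have "\<bar>Hf 0 s \<omega>\<bar> \<le> c0 * \<bar>\<gamma>\<bar> + C0 * \<bar>\<gamma>\<bar>" if "\<omega> \<in> space M" for s \<omega>
    using bounds[OF that, of s] by (simp add: abs_le_iff)
  then show ?thesis by (rule that)
qed

lemma continuous_le_iff_rat:
  fixes f :: "real \<Rightarrow> real"
  assumes "continuous_on UNIV f"
  shows "(\<forall>s. f s \<le> c) \<longleftrightarrow> (\<forall>q::rat. f (of_rat q) \<le> c)"
  using continuous_le_on_closure[of \<rat> f _ c] assms Rats_closure_real by (auto simp: Rats_def)

lemma (in hamiltonian_1d) subsolution_levels:
  "{lam. \<exists>v. glob_lip v \<and> visc_sub G v lam} = {lam. \<forall>s. G 0 s \<le> lam}"
  using subsolution_level_ge zero_subsolution by blast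

lemma H1to6_bdd_above_H0:
  assumes "H1to6 M Hf" and "\<omega> \<in> space M"
  shows "bdd_above (range (\<lambda>s. Hf 0 s \<omega>))"
proof -
  obtain C where "\<And>s. \<bar>Hf 0 s \<omega>\<bar> \<le> C"
    using assms H2_H0_bounded unfolding H1to6_def by metis
  then show ?thesis by (intro bdd_aboveI2[where M=C]) (meson abs_le_D1)
qed

lemma Atilde_eq_SUP:
  assumes "H1to6 M Hf" and "\<omega> \<in> space M"
  shows "Atilde Hf \<omega> = (SUP s. Hf 0 s \<omega>)"
proof -
  interpret hamiltonian_1d "\<lambda>p s. Hf p s \<omega>" using H1to6_hamiltonian_1d[OF assms] .
  have "{mu. subsols Hf mu \<omega> \<noteq> {}} = {lam. \<forall>s. Hf 0 s \<omega> \<le> lam}"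
    using subsolution_levels by (auto simp: subsols_def)
  then show ?thesis
    unfolding Atilde_def using H1to6_bdd_above_H0[OF assms]
    by (auto intro!: cInf_eq_minimum cSUP_least cSUP_upper)
qed

lemma Atilde_le_iff:
  "H1to6 M Hf \<Longrightarrow> \<omega> \<in> space M \<Longrightarrow> Atilde Hf \<omega> \<le> c \<longleftrightarrow> (\<forall>s. Hf 0 s \<omega> \<le> c)"
  by (simp add: Atilde_eq_SUP cSUP_le_iff H1to6_bdd_above_H0)

lemma H0_le_Atilde:
  assumes "H1to6 M Hf" and "\<omega> \<in> space M"
  shows "Hf 0 s \<omega> \<le> Atilde Hf \<omega>"
  using cSUP_upper[OF UNIV_I H1to6_bdd_above_H0[OF assms]] Atilde_eq_SUP[OF assms] by simp

lemma Atilde_measurable: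
  assumes H: "H1to6 M Hf"
  shows "Atilde Hf \<in> borel_measurable M"
proof -
  have Hf: "(\<lambda>(py, \<omega>). Hf (fst py) (snd py) \<omega>) \<in> borel_measurable ((borel :: (real \<times> real) measure) \<Otimes>\<^sub>M M)"
    using H by (simp add: H1to6_def H_meas_def)
  have [measurable]: "(\<lambda>\<omega>. Hf 0 (of_rat q) \<omega>) \<in> borel_measurable M" for q :: rat
    using measurable_Pair2[OF Hf, of "(0, of_rat q)"] by simp
  have "{\<omega> \<in> space M. Atilde Hf \<omega> \<le> c} = {\<omega> \<in> space M. \<forall>q::rat. Hf 0 (of_rat q) \<omega> \<le> c}" for c
  proof -
    have "Atilde Hf \<omega> \<le> c \<longleftrightarrow> (\<forall>q::rat. Hf 0 (of_rat q) \<omega> \<le> c)" if \<omega>: "\<omega> \<in> space M" for \<omega>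
    proof -
      interpret hamiltonian_1d "\<lambda>p s. Hf p s \<omega>" using H1to6_hamiltonian_1d[OF H \<omega>] .
      have "continuous_on UNIV (\<lambda>s. Hf 0 s \<omega>)"
        using tendsto_in_s by (intro continuous_at_imp_continuous_on ballI) (simp add: isCont_def)
      then show ?thesis using Atilde_le_iff[OF H \<omega>] continuous_le_iff_rat by blast
    qed
    then show ?thesis by blast
  qed
  then show ?thesis by (simp add: borel_measurable_iff_le)
qed

lemma Atilde_shift_invariant:
  assumes "H1to6 M Hf" "ergodic_group M \<tau>" "H8 M \<tau> Hf" and \<omega>: "\<omega> \<in> space M"
  shows "Atilde Hf (\<tau> z \<omega>) = Atilde Hf \<omega>"
proof -
  have "range (\<lambda>s. Hf 0 s (\<tau> z \<omega>)) = range (\<lambda>s. Hf 0 s \<omega>)"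
    using assms(3) \<omega> unfolding H8_def by (auto simp: image_iff) (metis diff_add_cancel)+
  then show ?thesis
    using assms ergodic_group_space[OF assms(2) \<omega>] by (simp add: Atilde_eq_SUP)
qed

lemma mu_star_AE:
  assumes "prob_space M" "ergodic_group M \<tau>" and H: "H1to6 M Hf" "H8 M \<tau> Hf"
  shows "AE \<omega> in M. Atilde Hf \<omega> = mu_star M Hf"
proof -
  interpret prob_space M by fact
  obtain C where C: "\<And>s \<omega>. \<omega> \<in> space M \<Longrightarrow> \<bar>Hf 0 s \<omega>\<bar> \<le> C"
    using H H2_H0_bounded unfolding H1to6_def by metis
  have bounded: "\<bar>Atilde Hf \<omega>\<bar> \<le> C" if "\<omega> \<in> space M" for \<omega>
    using C[OF that] H0_le_Atilde[OF H(1) that, of 0] Atilde_le_iff[OF H(1) that]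
    by (auto simp: abs_le_iff) (meson order_trans neg_le_iff_le)
  have AE_const: "AE \<omega> in M. Atilde Hf \<omega> = (\<integral>\<omega>. Atilde Hf \<omega> \<partial>M)"
    by (rule ergodic_invariant_AE_const[OF assms(2) Atilde_measurable[OF H(1)] bounded])
       (use Atilde_shift_invariant[OF H(1) assms(2) H(2)] in auto)
  have "mu_star M Hf = (\<integral>\<omega>. Atilde Hf \<omega> \<partial>M)"
    unfolding mu_star_def
  proof (rule the_equality)
    fix c assume "AE \<omega> in M. Atilde Hf \<omega> = c"
    with AE_const have "AE \<omega> in M. c = (\<integral>\<omega>. Atilde Hf \<omega> \<partial>M)" by eventually_elim simp
    then show "c = (\<integral>\<omega>. Atilde Hf \<omega> \<partial>M)" by simp
  qed (rule AE_const)
  then show ?thesis using AE_const by simp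
qed

section \<open>Homogenization of the metric function\<close>

definition random_root :: "real \<Rightarrow> (real \<Rightarrow> real \<Rightarrow> 'a \<Rightarrow> real) \<Rightarrow> real \<Rightarrow> 'a \<Rightarrow> real" where
  "random_root mu Hf s \<omega> = measure lborel {p. 0 \<le> p \<and> Hf p s \<omega> < mu}"

lemma H_meas_reparametrize:
  assumes "H_meas M Hf" and a: "continuous_on UNIV a" and c: "continuous_on UNIV c"
  shows "H_meas M (\<lambda>p s \<omega>. Hf (a p) (c s) \<omega>)"
proof -
  have Hf[measurable]: "(\<lambda>(py, \<omega>). Hf (fst py) (snd py) \<omega>)
      \<in> borel_measurable ((borel :: (real \<times> real) measure) \<Otimes>\<^sub>M M)"
    using assms(1) by (simp add: H_meas_def)
  have "(\<lambda>py::real \<times> real. (a (fst py), c (snd py))) \<in> borel_measurable borel"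
    by (intro borel_measurable_continuous_onI continuous_on_Pair continuous_on_compose2[OF a]
        continuous_on_compose2[OF c] continuous_intros) auto
  then have "(\<lambda>x::(real \<times> real) \<times> 'a. ((a (fst (fst x)), c (snd (fst x))), snd x))
      \<in> measurable ((borel :: (real \<times> real) measure) \<Otimes>\<^sub>M M) ((borel :: (real \<times> real) measure) \<Otimes>\<^sub>M M)"
    by (intro measurable_Pair) (auto simp: comp_def dest: measurable_comp[OF measurable_fst])
  from measurable_comp[OF this Hf] show ?thesis
    unfolding H_meas_def by (simp add: comp_def case_prod_beta')
qed

lemma random_root_measurable:
  assumes "H_meas M Hf"
  shows "(\<lambda>(\<omega>, s). random_root mu Hf s \<omega>) \<in> borel_measurable (M \<Otimes>\<^sub>M lborel)"
proof -
  have Hf[measurable]: "(\<lambda>(py, \<omega>). Hf (fst py) (snd py) \<omega>)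
      \<in> borel_measurable ((borel :: (real \<times> real) measure) \<Otimes>\<^sub>M M)"
    using assms by (simp add: H_meas_def)
  have "(\<lambda>x::('a \<times> real) \<times> real. ((snd x, snd (fst x)), fst (fst x)))
      \<in> measurable ((M \<Otimes>\<^sub>M lborel) \<Otimes>\<^sub>M lborel) ((borel :: (real \<times> real) measure) \<Otimes>\<^sub>M M)"
  proof (intro measurable_Pair)
    have "(\<lambda>x::('a \<times> real) \<times> real. (snd x, snd (fst x)))
        \<in> measurable ((M \<Otimes>\<^sub>M lborel) \<Otimes>\<^sub>M lborel) (borel \<Otimes>\<^sub>M borel)"
      by measurable
    then show "(\<lambda>x::('a \<times> real) \<times> real. (snd x, snd (fst x)))
        \<in> measurable ((M \<Otimes>\<^sub>M lborel) \<Otimes>\<^sub>M lborel) (borel :: (real \<times> real) measure)"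
      by (simp add: borel_prod)
  qed measurable
  from measurable_comp[OF this Hf]
  have [measurable]: "(\<lambda>x::('a \<times> real) \<times> real. Hf (snd x) (snd (fst x)) (fst (fst x)))
      \<in> borel_measurable ((M \<Otimes>\<^sub>M lborel) \<Otimes>\<^sub>M lborel)"
    by (simp add: comp_def)
  define Q where "Q = {x \<in> space ((M \<Otimes>\<^sub>M lborel) \<Otimes>\<^sub>M lborel).
      0 \<le> snd x \<and> Hf (snd x) (snd (fst x)) (fst (fst x)) < mu}"
  have "Q \<in> sets ((M \<Otimes>\<^sub>M lborel) \<Otimes>\<^sub>M lborel)" unfolding Q_def by measurable
  then have "(\<lambda>x. enn2real (emeasure lborel (Pair x -` Q))) \<in> borel_measurable (M \<Otimes>\<^sub>M lborel)"
    by (intro borel_measurable_enn2real lborel.measurable_emeasure_Pair)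
  then show ?thesis
  proof (rule measurable_cong[THEN iffD1, rotated])
    fix x :: "'a \<times> real" assume "x \<in> space (M \<Otimes>\<^sub>M lborel)"
    then have "Pair x -` Q = {p. 0 \<le> p \<and> Hf p (snd x) (fst x) < mu}"
      by (auto simp: Q_def space_pair_measure)
    then show "enn2real (emeasure lborel (Pair x -` Q)) = (case x of (\<omega>, s) \<Rightarrow> random_root mu Hf s \<omega>)"
      by (auto simp: random_root_def measure_def split: prod.splits)
  qed
qed

lemma random_root_bounded:
  assumes "H3 M Hf"
  obtains R where "\<And>\<omega> s. \<omega> \<in> space M \<Longrightarrow> \<bar>random_root mu Hf s \<omega>\<bar> \<le> R"
proof -
  obtain R where R: "\<And>p s \<omega>. \<omega> \<in> space M \<Longrightarrow> R \<le> \<bar>p\<bar> \<Longrightarrow> mu \<le> Hf p s \<omega>"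
    using assms unfolding H3_def by metis
  have "\<bar>random_root mu Hf s \<omega>\<bar> \<le> max R 0" if "\<omega> \<in> space M" for \<omega> s
  proof -
    let ?S = "{p. 0 \<le> p \<and> Hf p s \<omega> < mu}"
    have sub: "?S \<subseteq> {0..max R 0}"
      using R[OF that] by (force simp: not_le[symmetric])
    have "measure lborel ?S \<le> max R 0"
    proof (cases "?S \<in> sets lborel")
      case True
      have "measure lborel ?S \<le> measure lborel {0..max R 0}"
        by (rule measure_mono_fmeasurable[OF sub True])
           (auto intro!: fmeasurableI simp: emeasure_lborel_Icc_eq)
      then show ?thesis by simp
    qed (simp add: measure_notin_sets)
    then show ?thesis by (simp add: random_root_def)
  qed
  then show ?thesis by (rule that)
qed

lemma random_root_averages_converge:
  assumes "prob_space M" and E: "ergodic_group M \<tau>"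
    and Hf: "H_meas M Hf" "H3 M Hf" "H8 M \<tau> Hf" and "c \<noteq> 0"
  obtains \<beta> where "0 \<le> \<beta>" "AE \<omega> in M. long_run_average (\<lambda>s. random_root mu Hf (c * s) \<omega>) \<beta>"
proof -
  obtain R where R: "\<And>\<omega> s. \<omega> \<in> space M \<Longrightarrow> \<bar>random_root mu Hf s \<omega>\<bar> \<le> R"
    using random_root_bounded[OF Hf(2)] by blast
  interpret ergodic_stationary_process M "\<lambda>z. \<tau> (c * z)" "\<lambda>s \<omega>. random_root mu Hf (c * s) \<omega>" R
  proof (rule ergodic_stationary_process.intro[OF \<open>prob_space M\<close>], rule ergodic_stationary_process_axioms.intro)
    show "ergodic_group M (\<lambda>z. \<tau> (c * z))" by (rule ergodic_group_rescale[OF E \<open>c \<noteq> 0\<close>])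
    have "H_meas M (\<lambda>p s \<omega>. Hf p (c * s) \<omega>)"
      by (rule H_meas_reparametrize[OF Hf(1)]) (auto intro: continuous_intros)
    from random_root_measurable[OF this]
    show "(\<lambda>(\<omega>, s). random_root mu Hf (c * s) \<omega>) \<in> borel_measurable (M \<Otimes>\<^sub>M lborel)"
      by (simp add: random_root_def)
    show "random_root mu Hf (c * (s + z)) \<omega> = random_root mu Hf (c * s) (\<tau> (c * z) \<omega>)"
      if "\<omega> \<in> space M" for \<omega> s z
      using Hf(3) that by (simp add: H8_def random_root_def distrib_left)
  qed (rule R)
  show ?thesis
  proof (rule that)
    show "0 \<le> mean" by (rule mean_nonneg) (simp add: random_root_def)
    show "AE \<omega> in M. long_run_average (\<lambda>s. random_root mu Hf (c * s) \<omega>) mean"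
      using averages_converge AE_space
      by eventually_elim (auto simp: long_run_average_def intro: path_integrable)
  qed
qed

lemma momentum_reflect_hyps:
  assumes "H_meas M Hf" "H3 M Hf" "H8 M \<tau> Hf"
  shows "H_meas M (\<lambda>p s \<omega>. Hf (- p) s \<omega>)" "H3 M (\<lambda>p s \<omega>. Hf (- p) s \<omega>)"
    "H8 M \<tau> (\<lambda>p s \<omega>. Hf (- p) s \<omega>)"
proof -
  show "H_meas M (\<lambda>p s \<omega>. Hf (- p) s \<omega>)"
    using H_meas_reparametrize[OF assms(1), of uminus "\<lambda>s. s"] by (simp add: continuous_on_minus)
  show "H3 M (\<lambda>p s \<omega>. Hf (- p) s \<omega>)"
    unfolding H3_def
  proof
    fix K
    obtain R where R: "\<forall>p y. \<forall>\<omega>\<in>space M. R \<le> \<bar>p\<bar> \<longrightarrow> K \<le> Hf p y \<omega>"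
      using assms(2) unfolding H3_def by blast
    have "K \<le> Hf (- p) y \<omega>" if "\<omega> \<in> space M" "R \<le> \<bar>p\<bar>" for p y \<omega>
      using R that by (metis abs_minus_cancel)
    then show "\<exists>R. \<forall>p y. \<forall>\<omega>\<in>space M. R \<le> \<bar>p\<bar> \<longrightarrow> K \<le> Hf (- p) y \<omega>" by blast
  qed
  show "H8 M \<tau> (\<lambda>p s \<omega>. Hf (- p) s \<omega>)"
    using assms(3) by (simp add: H8_def)
qed

lemma metric_fn_scaling_limit_forward:
  assumes "hamiltonian_1d_level (\<lambda>p s. Hf p s \<omega>) mu"
    and avg: "long_run_average gA \<alpha>" "long_run_average gB \<beta>"
    and far: "\<And>s. K \<le> s \<Longrightarrow> random_root mu Hf s \<omega> = gA s" "\<And>s. s \<le> - K \<Longrightarrow> random_root mu Hf s \<omega> = gB (- s)"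
    and "x \<le> y"
  shows "((\<lambda>t. metric_fn mu Hf (t * y) (t * x) \<omega> / t) \<longlongrightarrow> two_slope \<alpha> \<beta> y - two_slope \<alpha> \<beta> x) at_top"
proof -
  interpret hamiltonian_1d_level "\<lambda>p s. Hf p s \<omega>" mu by fact
  have root_eq: "root s = random_root mu Hf s \<omega>" for s by (simp add: root_def random_root_def)
  have lim: "((\<lambda>t. primitive root (t * c) / t) \<longlongrightarrow> two_slope \<alpha> \<beta> c) at_top" for c
    using far by (intro primitive_scaling_limit[OF root_integrable avg]) (auto simp: root_eq)
  have "\<forall>\<^sub>F t in at_top. primitive root (t * y) / t - primitive root (t * x) / t
      = metric_fn mu Hf (t * y) (t * x) \<omega> / t"
    using eventually_gt_at_top[of 0]
  proof eventually_elim
    case (elim t)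
    then have "t * x \<le> t * y" using \<open>x \<le> y\<close> by simp
    then show ?case
      using Sup_subsolution_increments[of "t * x" "t * y"]
      by (simp add: metric_fn_def subsols_def diff_divide_distrib)
  qed
  with tendsto_diff[OF lim lim] show ?thesis by (rule Lim_transform_eventually)
qed

definition effective_metric :: "real \<Rightarrow> real \<Rightarrow> real \<Rightarrow> real \<Rightarrow> real \<Rightarrow> real \<Rightarrow> real" where
  "effective_metric \<alpha>1 \<beta>1 \<alpha>2 \<beta>2 y x =
    (if x \<le> y then two_slope \<alpha>1 \<beta>1 y - two_slope \<alpha>1 \<beta>1 x
     else two_slope \<alpha>2 \<beta>2 (- y) - two_slope \<alpha>2 \<beta>2 (- x))"

lemma effective_metric_nonneg:
  "0 \<le> \<alpha>1 \<Longrightarrow> 0 \<le> \<beta>1 \<Longrightarrow> 0 \<le> \<alpha>2 \<Longrightarrow> 0 \<le> \<beta>2 \<Longrightarrow> 0 \<le> effective_metric \<alpha>1 \<beta>1 \<alpha>2 \<beta>2 y x"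
  using two_slope_mono[of \<alpha>1 \<beta>1 x y] two_slope_mono[of \<alpha>2 \<beta>2 "- x" "- y"]
  by (auto simp: effective_metric_def)

text \<open>For \<open>y < x\<close> the metric is computed through the reflection \<open>(p, s) \<mapsto> (-p, -s)\<close>, which
  turns the negative roots of \<open>H\<close> into positive roots; this is why the far-field slopes \<open>\<alpha>2\<close>,
  \<open>\<beta>2\<close> come from the momentum-reflected Hamiltonians.\<close>

lemma metric_fn_scaling_limit_realization:
  assumes H: "H1to6 M Hf" "\<omega> \<in> space M" "\<And>s. Hf 0 s \<omega> < mu"
    and far: "\<And>p s. K \<le> s \<Longrightarrow> Hf p s \<omega> = HR p s \<omega>" "\<And>p s. s \<le> - K \<Longrightarrow> Hf p s \<omega> = HL p s \<omega>"
    and avg: "long_run_average (\<lambda>s. random_root mu HR s \<omega>) \<alpha>1"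
      "long_run_average (\<lambda>s. random_root mu HL (- s) \<omega>) \<beta>1"
      "long_run_average (\<lambda>s. random_root mu (\<lambda>p s \<omega>. HL (- p) s \<omega>) (- s) \<omega>) \<alpha>2"
      "long_run_average (\<lambda>s. random_root mu (\<lambda>p s \<omega>. HR (- p) s \<omega>) s \<omega>) \<beta>2"
  shows "((\<lambda>t. metric_fn mu Hf (t * y) (t * x) \<omega> / t) \<longlongrightarrow> effective_metric \<alpha>1 \<beta>1 \<alpha>2 \<beta>2 y x) at_top"
proof -
  interpret hamiltonian_1d "\<lambda>p s. Hf p s \<omega>" by (rule H1to6_hamiltonian_1d[OF H(1,2)])
  have level: "hamiltonian_1d_level (\<lambda>p s. Hf p s \<omega>) mu"
    by unfold_locales (rule H(3))
  have level_reflect: "hamiltonian_1d_level (\<lambda>p s. reflect_hamiltonian Hf p s \<omega>) mu"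
    using reflected H(3) unfolding reflect_hamiltonian_def
    by (simp add: hamiltonian_1d_level_def hamiltonian_1d_level_axioms_def)
  show ?thesis
  proof (cases "x \<le> y")
    case True
    show ?thesis
      unfolding effective_metric_def using True
      by (simp, intro metric_fn_scaling_limit_forward[where Hf=Hf and \<omega>=\<omega> and K=K, OF level avg(1,2)])
         (auto simp: random_root_def far)
  next
    case False
    have "((\<lambda>t. metric_fn mu (reflect_hamiltonian Hf) (t * - y) (t * - x) \<omega> / t)
        \<longlongrightarrow> two_slope \<alpha>2 \<beta>2 (- y) - two_slope \<alpha>2 \<beta>2 (- x)) at_top"
      using False
      by (intro metric_fn_scaling_limit_forward[where Hf="reflect_hamiltonian Hf" and \<omega>=\<omega> and K=K,
            OF level_reflect avg(3,4)])
         (auto simp: random_root_def reflect_hamiltonian_def far)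
    then show ?thesis
      using False metric_fn_reflect[of mu Hf] by (simp add: effective_metric_def)
  qed
qed

lemma metric_fn_scaling_limit:
  assumes P: "prob_space M" and E: "ergodic_group M \<tau>"
    and HL: "H_meas M HL" "H3 M HL" "H8 M \<tau> HL" and HR: "H_meas M HR" "H3 M HR" "H8 M \<tau> HR"
  obtains mbar N where "\<And>y x. 0 \<le> mbar y x" "N \<in> null_sets M"
    "\<And>Hf \<omega> K x y. H1to6 M Hf \<Longrightarrow> \<omega> \<in> space M - N \<Longrightarrow> (\<And>s. Hf 0 s \<omega> < mu) \<Longrightarrow>
      (\<And>p s. K \<le> s \<Longrightarrow> Hf p s \<omega> = HR p s \<omega>) \<Longrightarrow> (\<And>p s. s \<le> - K \<Longrightarrow> Hf p s \<omega> = HL p s \<omega>) \<Longrightarrow>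
      ((\<lambda>t. metric_fn mu Hf (t * y) (t * x) \<omega> / t) \<longlongrightarrow> mbar y x) at_top"
proof -
  obtain \<alpha>1 where \<alpha>1: "0 \<le> \<alpha>1" "AE \<omega> in M. long_run_average (\<lambda>s. random_root mu HR s \<omega>) \<alpha>1"
    by (rule random_root_averages_converge[OF P E HR, of 1]) auto
  obtain \<beta>1 where \<beta>1: "0 \<le> \<beta>1" "AE \<omega> in M. long_run_average (\<lambda>s. random_root mu HL (- s) \<omega>) \<beta>1"
    by (rule random_root_averages_converge[OF P E HL, of "- 1"]) auto
  obtain \<alpha>2 where \<alpha>2: "0 \<le> \<alpha>2"
    "AE \<omega> in M. long_run_average (\<lambda>s. random_root mu (\<lambda>p s \<omega>. HL (- p) s \<omega>) (- s) \<omega>) \<alpha>2"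
    by (rule random_root_averages_converge[OF P E momentum_reflect_hyps[OF HL], of "- 1"]) auto
  obtain \<beta>2 where \<beta>2: "0 \<le> \<beta>2"
    "AE \<omega> in M. long_run_average (\<lambda>s. random_root mu (\<lambda>p s \<omega>. HR (- p) s \<omega>) s \<omega>) \<beta>2"
    by (rule random_root_averages_converge[OF P E momentum_reflect_hyps[OF HR], of 1]) auto
  from \<alpha>1(2) \<beta>1(2) \<alpha>2(2) \<beta>2(2)
  have "AE \<omega> in M. long_run_average (\<lambda>s. random_root mu HR s \<omega>) \<alpha>1
      \<and> long_run_average (\<lambda>s. random_root mu HL (- s) \<omega>) \<beta>1
      \<and> long_run_average (\<lambda>s. random_root mu (\<lambda>p s \<omega>. HL (- p) s \<omega>) (- s) \<omega>) \<alpha>2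
      \<and> long_run_average (\<lambda>s. random_root mu (\<lambda>p s \<omega>. HR (- p) s \<omega>) s \<omega>) \<beta>2"
    by eventually_elim blast
  then obtain N where "N \<in> null_sets M" and avg: "\<And>\<omega>. \<omega> \<in> space M - N \<Longrightarrow>
      long_run_average (\<lambda>s. random_root mu HR s \<omega>) \<alpha>1
      \<and> long_run_average (\<lambda>s. random_root mu HL (- s) \<omega>) \<beta>1
      \<and> long_run_average (\<lambda>s. random_root mu (\<lambda>p s \<omega>. HL (- p) s \<omega>) (- s) \<omega>) \<alpha>2
      \<and> long_run_average (\<lambda>s. random_root mu (\<lambda>p s \<omega>. HR (- p) s \<omega>) s \<omega>) \<beta>2"
    by (rule AE_E3) blast
  show ?thesis
  proof (rule that[of "effective_metric \<alpha>1 \<beta>1 \<alpha>2 \<beta>2" N])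
    show "0 \<le> effective_metric \<alpha>1 \<beta>1 \<alpha>2 \<beta>2 y x" for y x
      using \<alpha>1(1) \<beta>1(1) \<alpha>2(1) \<beta>2(1) by (rule effective_metric_nonneg)
    show "((\<lambda>t. metric_fn mu Hf (t * y) (t * x) \<omega> / t) \<longlongrightarrow> effective_metric \<alpha>1 \<beta>1 \<alpha>2 \<beta>2 y x) at_top"
      if "H1to6 M Hf" "\<omega> \<in> space M - N" "\<And>s. Hf 0 s \<omega> < mu"
        "\<And>p s. K \<le> s \<Longrightarrow> Hf p s \<omega> = HR p s \<omega>" "\<And>p s. s \<le> - K \<Longrightarrow> Hf p s \<omega> = HL p s \<omega>"
      for Hf \<omega> K x y
      using that avg[OF that(2)]
      by (intro metric_fn_scaling_limit_realization[of M Hf \<omega> mu K HR HL]) auto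
  qed (rule \<open>N \<in> null_sets M\<close>)
qed

lemma antimono_cutoff_range:
  fixes \<phi> :: "real \<Rightarrow> real"
  assumes "antimono \<phi>" "\<forall>y\<le>-1. \<phi> y = 1" "\<forall>y\<ge>1. \<phi> y = 0"
  shows "0 \<le> \<phi> s" "\<phi> s \<le> 1"
proof -
  have "\<phi> (max s 1) \<le> \<phi> s" "\<phi> s \<le> \<phi> (min s (- 1))" by (auto intro: antimonoD[OF assms(1)])
  then show "0 \<le> \<phi> s" "\<phi> s \<le> 1" using assms(2,3) by auto
qed

lemma H7_WFL_far_field:
  assumes "H7_WFL M \<phi> HL HR H" "\<omega> \<in> space M"
  shows "1 \<le> s \<Longrightarrow> H p s \<omega> = HR p s \<omega>" and "s \<le> - 1 \<Longrightarrow> H p s \<omega> = HL p s \<omega>"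
  using assms by (auto simp: H7_WFL_def)

lemma H7_WFL_H0_below:
  assumes "H7_WFL M \<phi> HL HR H" "\<omega> \<in> space M"
    and "HL 0 s \<omega> \<le> m" "HR 0 s \<omega> \<le> m" "m < mu"
  shows "H 0 s \<omega> < mu"
proof -
  have \<phi>: "0 \<le> \<phi> s" "\<phi> s \<le> 1"
    using assms(1) antimono_cutoff_range[of \<phi>] by (auto simp: H7_WFL_def)
  have "H 0 s \<omega> = \<phi> s * HL 0 s \<omega> + (1 - \<phi> s) * HR 0 s \<omega>"
    using assms(1,2) by (simp add: H7_WFL_def)
  also have "\<dots> \<le> \<phi> s * m + (1 - \<phi> s) * m"
    using \<phi> assms(3,4) by (intro add_mono mult_left_mono) auto
  also have "\<dots> < mu" using assms(5) by (simp add: algebra_simps)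
  finally show ?thesis .
qed

lemma H7_eps_far_field:
  assumes "H7_eps M \<epsilon> \<psi> HL HR H0 Hf" "0 < \<epsilon>" "\<omega> \<in> space M"
  shows "2 / sqrt \<epsilon> + 1 \<le> s \<Longrightarrow> Hf p s \<omega> = HR p s \<omega>"
    and "s \<le> - (2 / sqrt \<epsilon> + 1) \<Longrightarrow> Hf p s \<omega> = HL p s \<omega>"
proof -
  have "0 < 1 / sqrt \<epsilon>" "1 / sqrt \<epsilon> < 2 / sqrt \<epsilon>" using assms(2) by (simp_all add: divide_strict_right_mono)
  then show "2 / sqrt \<epsilon> + 1 \<le> s \<Longrightarrow> Hf p s \<omega> = HR p s \<omega>"
    and "s \<le> - (2 / sqrt \<epsilon> + 1) \<Longrightarrow> Hf p s \<omega> = HL p s \<omega>"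
    using assms(1,3) unfolding H7_eps_def by auto
qed

lemma scaling_limit_H7_eps:
  assumes P: "prob_space M" and E: "ergodic_group M \<tau>"
    and Heps: "\<And>\<epsilon>. 0 < \<epsilon> \<Longrightarrow> H7_eps M \<epsilon> (\<psi> \<epsilon>) HL HR H0 (Heps \<epsilon>)"
      "\<And>\<epsilon>. 0 < \<epsilon> \<Longrightarrow> H1to6 M (Heps \<epsilon>)"
    and HL: "H1to6 M HL" "H8 M \<tau> HL" and HR: "H1to6 M HR" "H8 M \<tau> HR"
    and \<Omega>1: "\<And>\<epsilon>. 0 < \<epsilon> \<Longrightarrow> \<Omega>1 \<epsilon> \<in> sets M" "\<And>\<epsilon> \<epsilon>'. 0 < \<epsilon> \<Longrightarrow> \<epsilon> \<le> \<epsilon>' \<Longrightarrow> \<Omega>1 \<epsilon>' \<subseteq> \<Omega>1 \<epsilon>"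
      "((\<lambda>\<epsilon>. measure M (\<Omega>1 \<epsilon>)) \<longlongrightarrow> 1) (at_right 0)"
      "\<And>\<epsilon> \<omega>. 0 < \<epsilon> \<Longrightarrow> \<omega> \<in> \<Omega>1 \<epsilon> \<Longrightarrow> Atilde (Heps \<epsilon>) \<omega> = mu_star M H0"
    and "mu_star M H0 < \<mu>"
  shows "\<exists>\<Omega>0 :: real \<Rightarrow> 'a set. \<exists>\<theta> :: real \<Rightarrow> real. \<exists>mbar :: real \<Rightarrow> real \<Rightarrow> real.
        (\<forall>\<epsilon>>0. \<Omega>0 \<epsilon> \<in> sets M \<and> \<Omega>0 \<epsilon> \<subseteq> \<Omega>1 \<epsilon> \<and> measure M (\<Omega>0 \<epsilon>) = 1 - \<theta> \<epsilon>) \<and>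
        (\<forall>\<epsilon> \<epsilon>'. 0 < \<epsilon> \<and> \<epsilon> \<le> \<epsilon>' \<longrightarrow> \<Omega>0 \<epsilon>' \<subseteq> \<Omega>0 \<epsilon>) \<and>
        (\<theta> \<longlongrightarrow> 0) (at_right 0) \<and>
        (\<forall>y x. mbar y x \<ge> 0) \<and>
        (\<forall>\<epsilon>>0. \<forall>\<omega>\<in>\<Omega>0 \<epsilon>. \<forall>x y.
           ((\<lambda>t. metric_fn \<mu> (Heps \<epsilon>) (t * y) (t * x) \<omega> / t) \<longlongrightarrow> mbar y x) at_top)"
proof -
  obtain mbar N where mbar: "\<And>y x. 0 \<le> mbar y x" and N: "N \<in> null_sets M"
    and lim: "\<And>Hf \<omega> K x y. H1to6 M Hf \<Longrightarrow> \<omega> \<in> space M - N \<Longrightarrow> (\<And>s. Hf 0 s \<omega> < \<mu>) \<Longrightarrow>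
      (\<And>p s. K \<le> s \<Longrightarrow> Hf p s \<omega> = HR p s \<omega>) \<Longrightarrow> (\<And>p s. s \<le> - K \<Longrightarrow> Hf p s \<omega> = HL p s \<omega>) \<Longrightarrow>
      ((\<lambda>t. metric_fn \<mu> Hf (t * y) (t * x) \<omega> / t) \<longlongrightarrow> mbar y x) at_top"
    using metric_fn_scaling_limit[OF P E H1to6_H_meas_H3[OF HL(1)] HL(2) H1to6_H_meas_H3[OF HR(1)] HR(2)]
    by blast
  define \<Omega>0 where "\<Omega>0 \<epsilon> = \<Omega>1 \<epsilon> - N" for \<epsilon>
  define \<theta> where "\<theta> \<epsilon> = 1 - measure M (\<Omega>0 \<epsilon>)" for \<epsilon>
  have "\<forall>\<^sub>F \<epsilon> in at_right 0. 1 - measure M (\<Omega>1 \<epsilon>) = \<theta> \<epsilon>"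
    using eventually_at_right_less[of 0]
    by eventually_elim (simp add: \<theta>_def \<Omega>0_def measure_Diff_null_set[OF \<Omega>1(1) N])
  moreover have "((\<lambda>\<epsilon>. 1 - measure M (\<Omega>1 \<epsilon>)) \<longlongrightarrow> 1 - 1) (at_right 0)"
    by (intro tendsto_diff tendsto_const \<Omega>1(3))
  ultimately have \<theta>: "(\<theta> \<longlongrightarrow> 0) (at_right 0)" by (simp add: Lim_transform_eventually)
  have "((\<lambda>t. metric_fn \<mu> (Heps \<epsilon>) (t * y) (t * x) \<omega> / t) \<longlongrightarrow> mbar y x) at_top"
    if \<epsilon>: "0 < \<epsilon>" and \<omega>: "\<omega> \<in> \<Omega>0 \<epsilon>" for \<epsilon> \<omega> x y
  proof -
    have \<omega>_space: "\<omega> \<in> space M - N"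
      using \<omega> sets.sets_into_space[OF \<Omega>1(1)[OF \<epsilon>]] by (auto simp: \<Omega>0_def)
    show ?thesis
    proof (rule lim[OF Heps(2)[OF \<epsilon>] \<omega>_space])
      show "Heps \<epsilon> 0 s \<omega> < \<mu>" for s
        using H0_le_Atilde[OF Heps(2)[OF \<epsilon>], of \<omega> s] \<Omega>1(4)[OF \<epsilon>, of \<omega>] \<omega> \<omega>_space \<open>mu_star M H0 < \<mu>\<close>
        by (auto simp: \<Omega>0_def)
    qed (use H7_eps_far_field[OF Heps(1)[OF \<epsilon>] \<epsilon>] \<omega>_space in auto)
  qed
  moreover have "\<Omega>0 \<epsilon>' \<subseteq> \<Omega>0 \<epsilon>" if "0 < \<epsilon>" "\<epsilon> \<le> \<epsilon>'" for \<epsilon> \<epsilon>'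
    using \<Omega>1(2)[OF that] by (auto simp: \<Omega>0_def)
  ultimately show ?thesis using \<theta> mbar N \<Omega>1(1)
    by (intro exI[of _ \<Omega>0] exI[of _ \<theta>] exI[of _ mbar]) (auto simp: \<Omega>0_def \<theta>_def)
qed

lemma scaling_limit_H7_WFL:
  assumes P: "prob_space M" and E: "ergodic_group M \<tau>"
    and H: "H7_WFL M \<phi> HL HR H" "H1to6 M H"
    and HL: "H1to6 M HL" "H8 M \<tau> HL" and HR: "H1to6 M HR" "H8 M \<tau> HR"
    and \<mu>: "max (mu_star M HL) (mu_star M HR) < \<mu>"
  shows "\<exists>\<Omega>0 :: 'a set. \<exists>mbar :: real \<Rightarrow> real \<Rightarrow> real.
        \<Omega>0 \<in> sets M \<and> measure M \<Omega>0 = 1 \<and>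
        (\<forall>y x. mbar y x \<ge> 0) \<and>
        (\<forall>\<omega>\<in>\<Omega>0. \<forall>x y.
           ((\<lambda>t. metric_fn \<mu> H (t * y) (t * x) \<omega> / t) \<longlongrightarrow> mbar y x) at_top)"
proof -
  interpret prob_space M by (rule P)
  obtain mbar N where mbar: "\<And>y x. 0 \<le> mbar y x" and N: "N \<in> null_sets M"
    and lim: "\<And>Hf \<omega> K x y. H1to6 M Hf \<Longrightarrow> \<omega> \<in> space M - N \<Longrightarrow> (\<And>s. Hf 0 s \<omega> < \<mu>) \<Longrightarrow>
      (\<And>p s. K \<le> s \<Longrightarrow> Hf p s \<omega> = HR p s \<omega>) \<Longrightarrow> (\<And>p s. s \<le> - K \<Longrightarrow> Hf p s \<omega> = HL p s \<omega>) \<Longrightarrow>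
      ((\<lambda>t. metric_fn \<mu> Hf (t * y) (t * x) \<omega> / t) \<longlongrightarrow> mbar y x) at_top"
    using metric_fn_scaling_limit[OF P E H1to6_H_meas_H3[OF HL(1)] HL(2) H1to6_H_meas_H3[OF HR(1)] HR(2)]
    by blast
  have "AE \<omega> in M. Atilde HL \<omega> = mu_star M HL \<and> Atilde HR \<omega> = mu_star M HR"
    using mu_star_AE[OF P E HL] mu_star_AE[OF P E HR] by eventually_elim simp
  then obtain N' where N': "N' \<in> null_sets M"
    and A: "\<And>\<omega>. \<omega> \<in> space M - N' \<Longrightarrow> Atilde HL \<omega> = mu_star M HL \<and> Atilde HR \<omega> = mu_star M HR"
    by (rule AE_E3) blast
  define \<Omega>0 where "\<Omega>0 = space M - (N \<union> N')"
  have "((\<lambda>t. metric_fn \<mu> H (t * y) (t * x) \<omega> / t) \<longlongrightarrow> mbar y x) at_top" if \<omega>: "\<omega> \<in> \<Omega>0" for \<omega> x y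
  proof (rule lim[OF H(2)])
    show "\<omega> \<in> space M - N" using \<omega> by (simp add: \<Omega>0_def)
    show "H 0 s \<omega> < \<mu>" for s
      using \<omega> A[of \<omega>] H0_le_Atilde[OF HL(1), of \<omega> s] H0_le_Atilde[OF HR(1), of \<omega> s]
      by (intro H7_WFL_H0_below[OF H(1), where m="max (mu_star M HL) (mu_star M HR)"] \<mu>)
         (auto simp: \<Omega>0_def)
  qed (use H7_WFL_far_field[OF H(1)] \<omega> in \<open>auto simp: \<Omega>0_def\<close>)
  moreover have "\<Omega>0 \<in> sets M" "measure M \<Omega>0 = 1"
    using N N' measure_Diff_null_set[of "space M" M "N \<union> N'"] by (auto simp: \<Omega>0_def prob_space)
  ultimately show ?thesis using mbar by blast
qed

theorem theorem5p1:
  fixes M :: "'a measure" and \<tau> :: "real \<Rightarrow> 'a \<Rightarrow> 'a"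
    and HL HR H0 H :: "real \<Rightarrow> real \<Rightarrow> 'a \<Rightarrow> real"
    and Heps :: "real \<Rightarrow> real \<Rightarrow> real \<Rightarrow> 'a \<Rightarrow> real"
    and \<psi> :: "real \<Rightarrow> real \<Rightarrow> real" and \<phi> :: "real \<Rightarrow> real"
    and \<Omega>1 :: "real \<Rightarrow> 'a set" and \<mu> :: real
  assumes "prob_space M" and "ergodic_group M \<tau>"
  shows
   \<comment> \<open>case (H7-eps)\<close>
   "((\<forall>\<epsilon>>0. H7_eps M \<epsilon> (\<psi> \<epsilon>) HL HR H0 (Heps \<epsilon>) \<and> H1to6 M (Heps \<epsilon>) \<and> H9 M (Heps \<epsilon>)) \<and>
     H1to6 M HL \<and> H1to6 M HR \<and> H1to6 M H0 \<and> H8 M \<tau> HL \<and> H8 M \<tau> HR \<and> H8 M \<tau> H0 \<and>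
     (\<forall>\<epsilon>>0. \<Omega>1 \<epsilon> \<in> sets M) \<and>
     (\<forall>\<epsilon> \<epsilon>'. 0 < \<epsilon> \<and> \<epsilon> \<le> \<epsilon>' \<longrightarrow> \<Omega>1 \<epsilon>' \<subseteq> \<Omega>1 \<epsilon>) \<and>
     ((\<lambda>\<epsilon>. measure M (\<Omega>1 \<epsilon>)) \<longlongrightarrow> 1) (at_right 0) \<and>
     (\<forall>\<epsilon>>0. \<forall>\<omega>\<in>\<Omega>1 \<epsilon>. Atilde (Heps \<epsilon>) \<omega> = mu_star M H0) \<and>
     \<mu> > mu_star M H0
     \<longrightarrow>
     (\<exists>\<Omega>0 :: real \<Rightarrow> 'a set. \<exists>\<theta> :: real \<Rightarrow> real. \<exists>mbar :: real \<Rightarrow> real \<Rightarrow> real.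
        (\<forall>\<epsilon>>0. \<Omega>0 \<epsilon> \<in> sets M \<and> \<Omega>0 \<epsilon> \<subseteq> \<Omega>1 \<epsilon> \<and> measure M (\<Omega>0 \<epsilon>) = 1 - \<theta> \<epsilon>) \<and>
        (\<forall>\<epsilon> \<epsilon>'. 0 < \<epsilon> \<and> \<epsilon> \<le> \<epsilon>' \<longrightarrow> \<Omega>0 \<epsilon>' \<subseteq> \<Omega>0 \<epsilon>) \<and>
        (\<theta> \<longlongrightarrow> 0) (at_right 0) \<and>
        (\<forall>y x. mbar y x \<ge> 0) \<and>
        (\<forall>\<epsilon>>0. \<forall>\<omega>\<in>\<Omega>0 \<epsilon>. \<forall>x y.
           ((\<lambda>t. metric_fn \<mu> (Heps \<epsilon>) (t * y) (t * x) \<omega> / t) \<longlongrightarrow> mbar y x) at_top)))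
    \<and>
   \<comment> \<open>case (H7-WFL)\<close>
    (H7_WFL M \<phi> HL HR H \<and> H1to6 M H \<and> H9 M H \<and>
     H1to6 M HL \<and> H1to6 M HR \<and> H8 M \<tau> HL \<and> H8 M \<tau> HR \<and>
     \<mu> > max (mu_star M HL) (mu_star M HR)
     \<longrightarrow>
     (\<exists>\<Omega>0 :: 'a set. \<exists>mbar :: real \<Rightarrow> real \<Rightarrow> real.
        \<Omega>0 \<in> sets M \<and> measure M \<Omega>0 = 1 \<and>
        (\<forall>y x. mbar y x \<ge> 0) \<and>
        (\<forall>\<omega>\<in>\<Omega>0. \<forall>x y.
           ((\<lambda>t. metric_fn \<mu> H (t * y) (t * x) \<omega> / t) \<longlongrightarrow> mbar y x) at_top)))"
  using assms
  by (intro conjI impI; elim conjE)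
     (rule scaling_limit_H7_eps[where HL=HL and HR=HR and \<psi>=\<psi>]
        scaling_limit_H7_WFL[where HL=HL and HR=HR and \<phi>=\<phi>]; auto)+

end
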